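(* Let $G$ be a connected simplicial group and $f\colon G\to G$ a pointed simplicial map such that $f_*\colon\pi_*G\to\pi_*G$ is idempotent. Let $g\colon G\to G$ be the pointwise product $g(x)=x\cdot f(x)^{-1}$. Then, as a simplicial set, $G$ is weakly equivalent to $A\times B$, where $A=\mathrm{colim}(G\xrightarrow{f}G\xrightarrow{f}\cdots)$ and $B=\mathrm{colim}(G\xrightarrow{g}G\xrightarrow{g}\cdots)$; the weak equivalence is the composite $G\xrightarrow{\Delta}G\times G\to A\times B$ of the diagonal with the maps into the colimits.
   Context: Colimits are sequential colimits (mapping telescopes) in pointed simplicial sets. *)

theory Defs
  imports "HOL-Algebra.Group"
begin

text \<open>A simplicial set over element type 'a: sets of n-simplices, and for each
monotone map theta : [m] -> [n] the induced map act m n theta : X_n -> X_m.\<close>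

record 'a sset =
  cells :: "nat \<Rightarrow> 'a set"
  act :: "nat \<Rightarrow> nat \<Rightarrow> (nat \<Rightarrow> nat) \<Rightarrow> 'a \<Rightarrow> 'a"

definition delta_mor :: "nat \<Rightarrow> nat \<Rightarrow> (nat \<Rightarrow> nat) \<Rightarrow> bool" where
  "delta_mor m n \<theta> \<longleftrightarrow> (\<forall>i\<le>m. \<theta> i \<le> n) \<and> (\<forall>i j. i \<le> j \<and> j \<le> m \<longrightarrow> \<theta> i \<le> \<theta> j)"

definition sset :: "'a sset \<Rightarrow> bool" where
  "sset X \<longleftrightarrow>
     (\<forall>m n \<theta> x. delta_mor m n \<theta> \<and> x \<in> cells X n \<longrightarrow> act X m n \<theta> x \<in> cells X m) \<and>
     (\<forall>n x. x \<in> cells X n \<longrightarrow> act X n n id x = x) \<and>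
     (\<forall>l m n \<theta> \<phi> x. delta_mor l m \<theta> \<and> delta_mor m n \<phi> \<and> x \<in> cells X n \<longrightarrow>
          act X l m \<theta> (act X m n \<phi> x) = act X l n (\<phi> \<circ> \<theta>) x) \<and>
     (\<forall>m n \<theta> \<theta>' x. delta_mor m n \<theta> \<and> (\<forall>i\<le>m. \<theta> i = \<theta>' i) \<and> x \<in> cells X n \<longrightarrow>
          act X m n \<theta> x = act X m n \<theta>' x)"

definition smap :: "'a sset \<Rightarrow> 'b sset \<Rightarrow> (nat \<Rightarrow> 'a \<Rightarrow> 'b) \<Rightarrow> bool" where
  "smap X Y F \<longleftrightarrow>
     (\<forall>n x. x \<in> cells X n \<longrightarrow> F n x \<in> cells Y n) \<and>
     (\<forall>m n \<theta> x. delta_mor m n \<theta> \<and> x \<in> cells X n \<longrightarrow>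
          F m (act X m n \<theta> x) = act Y m n \<theta> (F n x))"

definition face :: "'a sset \<Rightarrow> nat \<Rightarrow> nat \<Rightarrow> 'a \<Rightarrow> 'a" where
  "face X n i x = act X n (Suc n) (\<lambda>j. if j < i then j else Suc j) x"

definition pt :: "'a sset \<Rightarrow> nat \<Rightarrow> 'a \<Rightarrow> 'a" where
  "pt X n v = act X n 0 (\<lambda>_. 0) v"

definition kan :: "'a sset \<Rightarrow> bool" where
  "kan X \<longleftrightarrow>
     (\<forall>n k y. k \<le> Suc n \<and> (\<forall>i\<le>Suc n. i \<noteq> k \<longrightarrow> y i \<in> cells X n) \<and>
        (\<forall>p i j. n = Suc p \<and> i < j \<and> j \<le> Suc n \<and> i \<noteq> k \<and> j \<noteq> k \<longrightarrow>
             face X p i (y j) = face X p (j - 1) (y i))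
      \<longrightarrow> (\<exists>x\<in>cells X (Suc n). \<forall>i\<le>Suc n. i \<noteq> k \<longrightarrow> face X n i x = y i))"

text \<open>Spherical k-simplices at vertex v (representatives of pi_k(X,v)).\<close>
definition sph :: "'a sset \<Rightarrow> 'a \<Rightarrow> nat \<Rightarrow> 'a \<Rightarrow> bool" where
  "sph X v k x \<longleftrightarrow> x \<in> cells X k \<and>
     (\<forall>j i. k = Suc j \<and> i \<le> k \<longrightarrow> face X j i x = pt X j v)"

text \<open>Combinatorial homotopy relation on spherical k-simplices at v
(for k = 0 this is the relation defining pi_0).\<close>
definition htp :: "'a sset \<Rightarrow> 'a \<Rightarrow> nat \<Rightarrow> 'a \<Rightarrow> 'a \<Rightarrow> bool" where
  "htp X v k x y \<longleftrightarrow> (\<exists>z\<in>cells X (Suc k).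
     (\<forall>i<k. face X k i z = pt X k v) \<and> face X k k z = x \<and> face X k (Suc k) z = y)"

text \<open>Weak equivalence between Kan complexes: bijection on pi_0 and on all
combinatorial homotopy groups pi_k, k >= 1, at every base vertex.\<close>
definition weq :: "'a sset \<Rightarrow> 'b sset \<Rightarrow> (nat \<Rightarrow> 'a \<Rightarrow> 'b) \<Rightarrow> bool" where
  "weq X Y F \<longleftrightarrow> sset X \<and> sset Y \<and> kan X \<and> kan Y \<and> smap X Y F \<and>
     (\<forall>y\<in>cells Y 0. \<exists>x\<in>cells X 0. htp Y y 0 (F 0 x) y) \<and>
     (\<forall>x\<in>cells X 0. \<forall>x'\<in>cells X 0. htp Y (F 0 x) 0 (F 0 x) (F 0 x') \<longrightarrow> htp X x 0 x x') \<and>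
     (\<forall>v\<in>cells X 0. \<forall>k>0.
        (\<forall>y. sph Y (F 0 v) k y \<longrightarrow> (\<exists>x. sph X v k x \<and> htp Y (F 0 v) k (F k x) y)) \<and>
        (\<forall>x x'. sph X v k x \<and> sph X v k x' \<and> htp Y (F 0 v) k (F k x) (F k x')
                 \<longrightarrow> htp X v k x x'))"

definition grp :: "'a sset \<Rightarrow> (nat \<Rightarrow> 'a \<Rightarrow> 'a \<Rightarrow> 'a) \<Rightarrow> (nat \<Rightarrow> 'a) \<Rightarrow> nat \<Rightarrow> 'a monoid" where
  "grp X mul e n = \<lparr>carrier = cells X n, mult = mul n, one = e n\<rparr>"

definition sgroup :: "'a sset \<Rightarrow> (nat \<Rightarrow> 'a \<Rightarrow> 'a \<Rightarrow> 'a) \<Rightarrow> (nat \<Rightarrow> 'a) \<Rightarrow> bool" where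
  "sgroup X mul e \<longleftrightarrow> sset X \<and> (\<forall>n. group (grp X mul e n)) \<and>
     (\<forall>m n \<theta> x y. delta_mor m n \<theta> \<and> x \<in> cells X n \<and> y \<in> cells X n \<longrightarrow>
        act X m n \<theta> (mul n x y) = mul m (act X m n \<theta> x) (act X m n \<theta> y))"

definition tel_rel :: "'a sset \<Rightarrow> (nat \<Rightarrow> 'a \<Rightarrow> 'a) \<Rightarrow> nat \<Rightarrow> ((nat \<times> 'a) \<times> (nat \<times> 'a)) set" where
  "tel_rel X F n = {((i, x), (j, y)). x \<in> cells X n \<and> y \<in> cells X n \<and>
      (\<exists>m. i \<le> m \<and> j \<le> m \<and> (F n ^^ (m - i)) x = (F n ^^ (m - j)) y)}"

definition colim :: "'a sset \<Rightarrow> (nat \<Rightarrow> 'a \<Rightarrow> 'a) \<Rightarrow> (nat \<times> 'a) set sset" where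
  "colim X F = \<lparr>cells = (\<lambda>n. (UNIV \<times> cells X n) // tel_rel X F n),
     act = (\<lambda>m n \<theta> c. \<Union>((\<lambda>(i, x). tel_rel X F m `` {(i, act X m n \<theta> x)}) ` c))\<rparr>"

definition colim_in :: "'a sset \<Rightarrow> (nat \<Rightarrow> 'a \<Rightarrow> 'a) \<Rightarrow> nat \<Rightarrow> 'a \<Rightarrow> (nat \<times> 'a) set" where
  "colim_in X F n x = tel_rel X F n `` {(0, x)}"

definition sprod :: "'a sset \<Rightarrow> 'b sset \<Rightarrow> ('a \<times> 'b) sset" where
  "sprod X Y = \<lparr>cells = (\<lambda>n. cells X n \<times> cells Y n),
     act = (\<lambda>m n \<theta> (a, b). (act X m n \<theta> a, act Y m n \<theta> b))\<rparr>"

end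

theory Submission
  imports Defs
begin

text \<open>
  In a simplicial group every homotopy class of spheres at any vertex is represented by a
  normalized sphere at the identity (all faces trivial), and on normalized spheres the group
  law induces the addition of \<open>\<pi>\<^sub>k\<close>, \<open>k \<ge> 1\<close>. Hence every pointed self-map \<open>F\<close> is additive on
  \<open>\<pi>\<^sub>k\<close> up to homotopy, and \<open>g = id \<cdot> f\<inverse>\<close> induces \<open>1 - f\<^sub>*\<close>. Idempotence of \<open>f\<^sub>*\<close> then makes
  \<open>g\<^sub>*\<close> idempotent too, with \<open>f\<^sub>* g\<^sub>* = g\<^sub>* f\<^sub>* = 0\<close>, so \<open>\<pi>\<^sub>k G = im f\<^sub>* \<oplus> im g\<^sub>*\<close>.
  The homotopy groups of a telescope of an idempotent are its image, because every class of
  the colimit is represented at a finite stage and every homotopy appears at a finite stage.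
  Connectedness of \<open>G\<close> lets us move the base point: \<open>F\<close> commutes up to homotopy with
  translating spheres from one vertex to another, which identifies \<open>\<pi>\<^sub>k\<close> of the telescope at
  the image of any vertex with that at the identity.
\<close>

section \<open>Simplicial identities\<close>

lemma sset_act_closed: "sset X \<Longrightarrow> delta_mor m n \<theta> \<Longrightarrow> x \<in> cells X n \<Longrightarrow> act X m n \<theta> x \<in> cells X m"
  unfolding sset_def by blast
lemma sset_act_id: "sset X \<Longrightarrow> x \<in> cells X n \<Longrightarrow> act X n n id x = x"
  unfolding sset_def by blast
lemma sset_act_comp: "sset X \<Longrightarrow> delta_mor l m \<theta> \<Longrightarrow> delta_mor m n \<phi> \<Longrightarrow> x \<in> cells X n \<Longrightarrow>
   act X l m \<theta> (act X m n \<phi> x) = act X l n (\<phi> \<circ> \<theta>) x"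
  unfolding sset_def by blast
lemma sset_act_cong: "sset X \<Longrightarrow> delta_mor m n \<theta> \<Longrightarrow> (\<forall>i\<le>m. \<theta> i = \<theta>' i) \<Longrightarrow> x \<in> cells X n \<Longrightarrow>
   act X m n \<theta> x = act X m n \<theta>' x"
  unfolding sset_def by blast

lemma delta_mor_comp: "delta_mor l m \<theta> \<Longrightarrow> delta_mor m n \<phi> \<Longrightarrow> delta_mor l n (\<phi> \<circ> \<theta>)"
  unfolding delta_mor_def by auto

lemma delta_mor_cong: "delta_mor m n \<theta> \<Longrightarrow> \<forall>i\<le>m. \<theta> i = \<theta>' i \<Longrightarrow> delta_mor m n \<theta>'"
  unfolding delta_mor_def by (metis le_trans)

lemma sset_act_act: "sset X \<Longrightarrow> delta_mor l m \<theta> \<Longrightarrow> delta_mor m n \<phi> \<Longrightarrow> x \<in> cells X n \<Longrightarrow>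
   (\<forall>i\<le>l. \<psi> i = \<phi> (\<theta> i)) \<Longrightarrow> act X l m \<theta> (act X m n \<phi> x) = act X l n \<psi> x"
  by (simp add: sset_act_comp sset_act_cong delta_mor_comp)

definition dface :: "nat \<Rightarrow> nat \<Rightarrow> nat" where "dface i = (\<lambda>j. if j < i then j else Suc j)"
definition ddeg :: "nat \<Rightarrow> nat \<Rightarrow> nat" where "ddeg i = (\<lambda>j. if j \<le> i then j else j - 1)"
definition degen :: "'a sset \<Rightarrow> nat \<Rightarrow> nat \<Rightarrow> 'a \<Rightarrow> 'a" where
  "degen X n i x = act X (Suc n) n (ddeg i) x"

lemma face_dface: "face X n i x = act X n (Suc n) (dface i) x"
  by (simp add: face_def dface_def)

lemma delta_mor_dface: "delta_mor n (Suc n) (dface i)"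
  unfolding delta_mor_def dface_def by auto
lemma delta_mor_ddeg: "i \<le> n \<Longrightarrow> delta_mor (Suc n) n (ddeg i)"
  unfolding delta_mor_def ddeg_def by auto
lemma delta_mor_const: "c \<le> n \<Longrightarrow> delta_mor m n (\<lambda>_. c)"
  unfolding delta_mor_def by auto
lemma delta_mor_step: "delta_mor m (Suc 0) (\<lambda>j. if j < a then 0 else 1)"
  unfolding delta_mor_def by auto

lemma face_closed: "sset X \<Longrightarrow> x \<in> cells X (Suc n) \<Longrightarrow> face X n i x \<in> cells X n"
  by (simp add: face_dface delta_mor_dface sset_act_closed)
lemma degen_closed: "sset X \<Longrightarrow> i \<le> n \<Longrightarrow> x \<in> cells X n \<Longrightarrow> degen X n i x \<in> cells X (Suc n)"
  by (simp add: degen_def delta_mor_ddeg sset_act_closed)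
lemma pt_closed: "sset X \<Longrightarrow> v \<in> cells X 0 \<Longrightarrow> pt X n v \<in> cells X n"
  by (simp add: pt_def delta_mor_const sset_act_closed)

lemma face_face: "sset X \<Longrightarrow> x \<in> cells X (Suc (Suc n)) \<Longrightarrow> i < j \<Longrightarrow>
   face X n i (face X (Suc n) j x) = face X n (j - 1) (face X (Suc n) i x)"
  unfolding face_dface
  apply (subst sset_act_act[where \<psi>="dface j \<circ> dface i"], simp_all add: delta_mor_dface)
  apply (subst sset_act_act[where \<psi>="dface j \<circ> dface i"], simp_all add: delta_mor_dface)
  by (auto simp: dface_def)

lemma face_degen_less: "sset X \<Longrightarrow> x \<in> cells X (Suc n) \<Longrightarrow> i < j \<Longrightarrow> j \<le> Suc n \<Longrightarrow>
   face X (Suc n) i (degen X (Suc n) j x) = degen X n (j - 1) (face X n i x)"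
  unfolding face_dface degen_def
  apply (subst sset_act_act[where \<psi>="ddeg j \<circ> dface i"], simp_all add: delta_mor_dface delta_mor_ddeg)
  apply (subst sset_act_act[where \<psi>="ddeg j \<circ> dface i"], simp_all add: delta_mor_dface delta_mor_ddeg)
  by (auto simp: dface_def ddeg_def)

lemma face_degen_eq: "sset X \<Longrightarrow> x \<in> cells X n \<Longrightarrow> j \<le> n \<Longrightarrow> (i = j \<or> i = Suc j) \<Longrightarrow>
   face X n i (degen X n j x) = x"
  unfolding face_dface degen_def
  apply (subst sset_act_act[where \<psi>="id"], simp_all add: delta_mor_dface delta_mor_ddeg)
  by (auto simp: dface_def ddeg_def sset_act_id)

lemma face_degen_greater: "sset X \<Longrightarrow> x \<in> cells X (Suc n) \<Longrightarrow> Suc j < i \<Longrightarrow> j \<le> n \<Longrightarrow> i \<le> Suc (Suc n) \<Longrightarrow>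
   face X (Suc n) i (degen X (Suc n) j x) = degen X n j (face X n (i - 1) x)"
  unfolding face_dface degen_def
  apply (subst sset_act_act[where \<psi>="ddeg j \<circ> dface i"], simp_all add: delta_mor_dface delta_mor_ddeg)
  apply (subst sset_act_act[where \<psi>="ddeg j \<circ> dface i"], simp_all add: delta_mor_dface delta_mor_ddeg)
  by (auto simp: dface_def ddeg_def)

lemma act_pt: "sset X \<Longrightarrow> v \<in> cells X 0 \<Longrightarrow> delta_mor m n \<theta> \<Longrightarrow> act X m n \<theta> (pt X n v) = pt X m v"
  unfolding pt_def by (subst sset_act_act[where \<psi>="\<lambda>_. 0"]) (simp_all add: delta_mor_const)

lemma face_pt: "sset X \<Longrightarrow> v \<in> cells X 0 \<Longrightarrow> face X n i (pt X (Suc n) v) = pt X n v"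
  by (simp add: face_dface act_pt delta_mor_dface)
lemma degen_pt: "sset X \<Longrightarrow> v \<in> cells X 0 \<Longrightarrow> i \<le> n \<Longrightarrow> degen X n i (pt X n v) = pt X (Suc n) v"
  by (simp add: degen_def act_pt delta_mor_ddeg)

lemma htp_0_basepoint: "htp X v 0 x y = htp X w 0 x y"
  by (simp add: htp_def)

section \<open>Simplicial groups\<close>

locale simplicial_group =
  fixes G :: "'a sset" and mul :: "nat \<Rightarrow> 'a \<Rightarrow> 'a \<Rightarrow> 'a" and e :: "nat \<Rightarrow> 'a"
  assumes sgroup_G: "sgroup G mul e"
begin

abbreviation C where "C n \<equiv> cells G n"
definition iv where "iv n x = inv\<^bsub>grp G mul e n\<^esub> x"
abbreviation d where "d n i x \<equiv> face G n i x"
abbreviation s where "s n i x \<equiv> degen G n i x"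

lemma sset_G: "sset G" using sgroup_G unfolding sgroup_def by (elim conjE)
lemma group_grp: "group (grp G mul e n)" using sgroup_G unfolding sgroup_def by simp

lemma mul_closed[simp]: "x \<in> C n \<Longrightarrow> y \<in> C n \<Longrightarrow> mul n x y \<in> C n"
  using group.subgroup_self[OF group_grp[of n]] unfolding subgroup_def grp_def by auto
lemma e_closed[simp]: "e n \<in> C n"
  using monoid.one_closed[OF group.is_monoid[OF group_grp[of n]]] by (simp add: grp_def)
lemma iv_closed[simp]: "x \<in> C n \<Longrightarrow> iv n x \<in> C n"
  using group.inv_closed[OF group_grp[of n]] by (simp add: grp_def iv_def)
lemma assoc: "x \<in> C n \<Longrightarrow> y \<in> C n \<Longrightarrow> z \<in> C n \<Longrightarrow> mul n (mul n x y) z = mul n x (mul n y z)"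
  using monoid.m_assoc[OF group.is_monoid[OF group_grp[of n]]] by (simp add: grp_def)
lemma lunit[simp]: "x \<in> C n \<Longrightarrow> mul n (e n) x = x"
  using monoid.l_one[OF group.is_monoid[OF group_grp[of n]]] by (simp add: grp_def)
lemma runit[simp]: "x \<in> C n \<Longrightarrow> mul n x (e n) = x"
  using monoid.r_one[OF group.is_monoid[OF group_grp[of n]]] by (simp add: grp_def)
lemma linv[simp]: "x \<in> C n \<Longrightarrow> mul n (iv n x) x = e n"
  using group.l_inv[OF group_grp[of n]] by (simp add: grp_def iv_def)
lemma rinv[simp]: "x \<in> C n \<Longrightarrow> mul n x (iv n x) = e n"
  using group.r_inv[OF group_grp[of n]] by (simp add: grp_def iv_def)
lemma iv_iv[simp]: "x \<in> C n \<Longrightarrow> iv n (iv n x) = x"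
  using group.inv_inv[OF group_grp[of n]] by (simp add: grp_def iv_def)
lemma iv_e[simp]: "iv n (e n) = e n"
  using monoid.inv_one[OF group.is_monoid[OF group_grp[of n]]] by (simp add: grp_def iv_def)
lemma lassoc_inv[simp]: "x \<in> C n \<Longrightarrow> y \<in> C n \<Longrightarrow> mul n (iv n x) (mul n x y) = y"
  by (simp add: assoc[symmetric])
lemma rassoc_inv[simp]: "x \<in> C n \<Longrightarrow> y \<in> C n \<Longrightarrow> mul n (mul n y x) (iv n x) = y"
  by (simp add: assoc)
lemma lassoc_inv2[simp]: "x \<in> C n \<Longrightarrow> y \<in> C n \<Longrightarrow> mul n x (mul n (iv n x) y) = y"
  by (simp add: assoc[symmetric])
lemma rassoc_inv2[simp]: "x \<in> C n \<Longrightarrow> y \<in> C n \<Longrightarrow> mul n (mul n y (iv n x)) x = y"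
  by (simp add: assoc)
lemma lcancel: "x \<in> C n \<Longrightarrow> y \<in> C n \<Longrightarrow> z \<in> C n \<Longrightarrow> mul n x y = mul n x z \<longleftrightarrow> y = z"
  by (metis lassoc_inv)
lemma unit_unique: "x \<in> C n \<Longrightarrow> y \<in> C n \<Longrightarrow> mul n x y = x \<Longrightarrow> y = e n"
  by (metis lcancel runit e_closed)
lemma inv_unique: "x \<in> C n \<Longrightarrow> y \<in> C n \<Longrightarrow> mul n x y = e n \<Longrightarrow> y = iv n x"
proof -
  assume a: "x \<in> C n" "y \<in> C n" "mul n x y = e n"
  hence "mul n x y = mul n x (iv n x)" by simp
  thus ?thesis using lcancel[of x n y "iv n x"] a by simp
qed

lemma act_mul: "delta_mor m n \<theta> \<Longrightarrow> x \<in> C n \<Longrightarrow> y \<in> C n \<Longrightarrow>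
    act G m n \<theta> (mul n x y) = mul m (act G m n \<theta> x) (act G m n \<theta> y)"
proof -
  have "\<forall>m n \<theta> x y. delta_mor m n \<theta> \<and> x \<in> C n \<and> y \<in> C n \<longrightarrow>
        act G m n \<theta> (mul n x y) = mul m (act G m n \<theta> x) (act G m n \<theta> y)"
    using sgroup_G unfolding sgroup_def by (elim conjE)
  thus "delta_mor m n \<theta> \<Longrightarrow> x \<in> C n \<Longrightarrow> y \<in> C n \<Longrightarrow> ?thesis" by simp
qed
lemma act_closed[simp]: "delta_mor m n \<theta> \<Longrightarrow> x \<in> C n \<Longrightarrow> act G m n \<theta> x \<in> C m"
  using sset_G sset_act_closed by metis
lemma act_e[simp]: "delta_mor m n \<theta> \<Longrightarrow> act G m n \<theta> (e n) = e m"
  using act_mul[of m n \<theta> "e n" "e n"] act_closed[of m n \<theta> "e n"] by (metis unit_unique lunit e_closed)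
lemma act_iv: "delta_mor m n \<theta> \<Longrightarrow> x \<in> C n \<Longrightarrow> act G m n \<theta> (iv n x) = iv m (act G m n \<theta> x)"
  using act_mul[of m n \<theta> x "iv n x"] by (intro inv_unique) auto

lemma pt_e: "pt G n (e 0) = e n"
  by (simp add: pt_def delta_mor_const)

lemma d_closed[simp]: "x \<in> C (Suc n) \<Longrightarrow> d n i x \<in> C n" by (simp add: sset_G face_closed)
lemma s_closed[simp]: "i \<le> n \<Longrightarrow> x \<in> C n \<Longrightarrow> s n i x \<in> C (Suc n)" by (simp add: sset_G degen_closed)
lemma d_mul[simp]: "x \<in> C (Suc n) \<Longrightarrow> y \<in> C (Suc n) \<Longrightarrow> d n i (mul (Suc n) x y) = mul n (d n i x) (d n i y)"
  by (simp add: face_dface act_mul delta_mor_dface)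
lemma d_iv[simp]: "x \<in> C (Suc n) \<Longrightarrow> d n i (iv (Suc n) x) = iv n (d n i x)"
  by (simp add: face_dface act_iv delta_mor_dface)
lemma d_e[simp]: "d n i (e (Suc n)) = e n"
  by (simp add: face_dface delta_mor_dface)
lemma s_mul[simp]: "i \<le> n \<Longrightarrow> x \<in> C n \<Longrightarrow> y \<in> C n \<Longrightarrow> s n i (mul n x y) = mul (Suc n) (s n i x) (s n i y)"
  by (simp add: degen_def act_mul delta_mor_ddeg)
lemma s_iv[simp]: "i \<le> n \<Longrightarrow> x \<in> C n \<Longrightarrow> s n i (iv n x) = iv (Suc n) (s n i x)"
  by (simp add: degen_def act_iv delta_mor_ddeg)
lemma s_e[simp]: "i \<le> n \<Longrightarrow> s n i (e n) = e (Suc n)"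
  by (simp add: degen_def delta_mor_ddeg)
lemma pt_G_closed[simp]: "v \<in> C 0 \<Longrightarrow> pt G n v \<in> C n" by (simp add: sset_G pt_closed)
lemma d_pt[simp]: "v \<in> C 0 \<Longrightarrow> d n i (pt G (Suc n) v) = pt G n v" by (simp add: sset_G face_pt)

lemma d_s_eq[simp]: "x \<in> C n \<Longrightarrow> j \<le> n \<Longrightarrow> d n j (s n j x) = x"
  by (simp add: sset_G face_degen_eq)
lemma d_s_Suc_eq[simp]: "x \<in> C n \<Longrightarrow> j \<le> n \<Longrightarrow> d n (Suc j) (s n j x) = x"
  by (simp add: sset_G face_degen_eq)

lemma d_s_less: "x \<in> C (Suc n) \<Longrightarrow> i < j \<Longrightarrow> j \<le> Suc n \<Longrightarrow> d (Suc n) i (s (Suc n) j x) = s n (j - 1) (d n i x)"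
  by (simp add: sset_G face_degen_less)
lemma d_s_greater: "x \<in> C (Suc n) \<Longrightarrow> Suc j < i \<Longrightarrow> j \<le> n \<Longrightarrow> i \<le> Suc (Suc n) \<Longrightarrow>
   d (Suc n) i (s (Suc n) j x) = s n j (d n (i - 1) x)"
  by (simp add: sset_G face_degen_greater)
lemma d_d: "x \<in> C (Suc (Suc n)) \<Longrightarrow> i < j \<Longrightarrow> d n i (d (Suc n) j x) = d n (j - 1) (d (Suc n) i x)"
  by (simp add: sset_G face_face)

text \<open>Moore-normalized representatives of \<open>\<pi>\<^sub>k(G, e)\<close>: identity elements take the place of the
  degenerate base vertices.\<close>

definition nsph :: "nat \<Rightarrow> 'a \<Rightarrow> bool" where
  "nsph k x \<longleftrightarrow> x \<in> C k \<and> (\<forall>j i. k = Suc j \<and> i \<le> k \<longrightarrow> d j i x = e j)"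
definition nhtp :: "nat \<Rightarrow> 'a \<Rightarrow> 'a \<Rightarrow> bool" where
  "nhtp k x y \<longleftrightarrow> (\<exists>z\<in>C (Suc k). (\<forall>i<k. d k i z = e k) \<and> d k k z = x \<and> d k (Suc k) z = y)"

lemma sph_e_iff: "sph G (e 0) k x \<longleftrightarrow> nsph k x"
  by (simp add: sph_def nsph_def pt_e)
lemma htp_e_iff: "htp G (e 0) k x y \<longleftrightarrow> nhtp k x y"
  by (simp add: htp_def nhtp_def pt_e)

lemma nsph_closed: "nsph k x \<Longrightarrow> x \<in> C k" by (simp add: nsph_def)
lemma nsph_face: "nsph (Suc j) x \<Longrightarrow> i \<le> Suc j \<Longrightarrow> d j i x = e j" by (simp add: nsph_def)
lemma nsph_mul: "nsph k x \<Longrightarrow> nsph k y \<Longrightarrow> nsph k (mul k x y)" by (auto simp: nsph_def)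
lemma nsph_iv: "nsph k x \<Longrightarrow> nsph k (iv k x)" by (auto simp: nsph_def)

lemma nhtp_closed: "nhtp k x y \<Longrightarrow> x \<in> C k \<and> y \<in> C k"
  unfolding nhtp_def by auto

lemma face_degen_nsph_less: "nsph k x \<Longrightarrow> i < j \<Longrightarrow> j \<le> k \<Longrightarrow> d k i (s k j x) = e k"
proof -
  assume a: "nsph k x" "i < j" "j \<le> k"
  then obtain p where k: "k = Suc p" by (cases k) auto
  have "d k i (s k j x) = s p (j - 1) (d p i x)" using a k d_s_less nsph_closed by simp
  also have "\<dots> = e k" using a k nsph_face by simp
  finally show ?thesis .
qed
lemma face_degen_nsph_greater: "nsph k x \<Longrightarrow> Suc j < i \<Longrightarrow> j \<le> k \<Longrightarrow> i \<le> Suc k \<Longrightarrow> d k i (s k j x) = e k"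
proof -
  assume a: "nsph k x" "Suc j < i" "j \<le> k" "i \<le> Suc k"
  then obtain p where k: "k = Suc p" by (cases k) auto
  have jp: "j \<le> p" using a k by simp
  have "d k i (s k j x) = s p j (d p (i - 1) x)" using a k d_s_greater[of x p j i] nsph_closed jp by simp
  also have "\<dots> = e k" using a k nsph_face jp by simp
  finally show ?thesis .
qed

lemma d_s_nsph:
  assumes "nsph k x" "j \<le> k" "i \<le> Suc k"
  shows "d k i (s k j x) = (if i = j \<or> i = Suc j then x else e k)"
  using assms face_degen_nsph_less face_degen_nsph_greater nsph_closed
  by (cases "i < j"; cases "i = j"; cases "i = Suc j") auto

lemma nhtp_refl: "nsph k x \<Longrightarrow> nhtp k x x"
  unfolding nhtp_def
  by (rule bexI[of _ "s k k x"]) (auto simp: face_degen_nsph_less nsph_closed)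

lemma nhtp_mul: "nhtp k x y \<Longrightarrow> nhtp k x' y' \<Longrightarrow> nhtp k (mul k x x') (mul k y y')"
  unfolding nhtp_def
proof (elim bexE conjE)
  fix z z' assume "z \<in> C (Suc k)" "z' \<in> C (Suc k)" and h: "\<forall>i<k. d k i z = e k" "d k k z = x" "d k (Suc k) z = y"
    "\<forall>i<k. d k i z' = e k" "d k k z' = x'" "d k (Suc k) z' = y'"
  thus "\<exists>z\<in>C (Suc k). (\<forall>i<k. d k i z = e k) \<and> d k k z = mul k x x' \<and> d k (Suc k) z = mul k y y'"
    by (intro bexI[of _ "mul (Suc k) z z'"]) auto
qed

lemma nhtp_iv: "nhtp k x y \<Longrightarrow> nhtp k (iv k x) (iv k y)"
  unfolding nhtp_def
proof (elim bexE conjE)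
  fix z assume "z \<in> C (Suc k)" and h: "\<forall>i<k. d k i z = e k" "d k k z = x" "d k (Suc k) z = y"
  thus "\<exists>z\<in>C (Suc k). (\<forall>i<k. d k i z = e k) \<and> d k k z = iv k x \<and> d k (Suc k) z = iv k y"
    by (intro bexI[of _ "iv (Suc k) z"]) auto
qed

lemma nhtp_sym: "nsph k x \<Longrightarrow> nsph k y \<Longrightarrow> nhtp k x y \<Longrightarrow> nhtp k y x"
proof -
  assume a: "nsph k x" "nsph k y" "nhtp k x y"
  have "nhtp k (mul k (mul k y (iv k x)) x) (mul k (mul k y (iv k y)) x)"
    using a by (intro nhtp_mul nhtp_iv nhtp_refl) auto
  thus ?thesis using a nsph_closed by simp
qed

lemma nhtp_trans: "nsph k y \<Longrightarrow> nhtp k x y \<Longrightarrow> nhtp k y u \<Longrightarrow> nhtp k x u"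
proof -
  assume a: "nsph k y" "nhtp k x y" "nhtp k y u"
  have "nhtp k (mul k (mul k x (iv k y)) y) (mul k (mul k y (iv k y)) u)"
    using a by (intro nhtp_mul nhtp_iv nhtp_refl) auto
  thus ?thesis using a nsph_closed nhtp_closed by simp
qed

lemma nhtp_if_nhtp_div_e: "nsph k x \<Longrightarrow> nsph k y \<Longrightarrow> nhtp k (mul k x (iv k y)) (e k) \<Longrightarrow> nhtp k x y"
proof -
  assume a: "nsph k x" "nsph k y" "nhtp k (mul k x (iv k y)) (e k)"
  have "nhtp k (mul k (mul k x (iv k y)) y) (mul k (e k) y)"
    using a by (intro nhtp_mul nhtp_refl) auto
  thus ?thesis using a nsph_closed by simp
qed

lemma nsph_missing_face: "V \<in> C (Suc k) \<Longrightarrow> j \<le> Suc k \<Longrightarrow> (\<forall>i\<le>Suc k. i \<noteq> j \<longrightarrow> d k i V = e k) \<Longrightarrow> nsph k (d k j V)"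
proof -
  assume a: "V \<in> C (Suc k)" "j \<le> Suc k" "\<forall>i\<le>Suc k. i \<noteq> j \<longrightarrow> d k i V = e k"
  show ?thesis unfolding nsph_def
  proof (intro conjI allI impI)
    show "d k j V \<in> C k" using a by simp
    fix p i assume b: "k = Suc p \<and> i \<le> k"
    show "d p i (d k j V) = e p"
    proof (cases "i < j")
      case True
      have "d p i (d k j V) = d p (j - 1) (d k i V)" using a b True d_d[of V p i j] by simp
      thus ?thesis using a b True by simp
    next
      case False
      have "d p j (d k (Suc i) V) = d p i (d k j V)" using a b False d_d[of V p j "Suc i"] by simp
      thus ?thesis using a b False by simp
    qed
  qed
qed

text \<open>Induction on \<open>k - j\<close>: multiplying \<open>V\<close> by the inverse of the \<open>j\<close>-th degeneracy of its
  \<open>j\<close>-th face moves the only nontrivial face one position up.\<close>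

lemma nhtp_missing_face_e: "V \<in> C (Suc k) \<Longrightarrow> j \<le> k \<Longrightarrow> (\<forall>i\<le>Suc k. i \<noteq> j \<longrightarrow> d k i V = e k) \<Longrightarrow> nhtp k (d k j V) (e k)"
proof (induction "k - j" arbitrary: j V)
  case 0
  hence "j = k" by simp
  thus ?case using 0 unfolding nhtp_def by (intro bexI[of _ V]) auto
next
  case (Suc t)
  define b where "b = d k j V"
  have Sb: "nsph k b" unfolding b_def using Suc.prems by (intro nsph_missing_face) auto
  define V' where "V' = mul (Suc k) (iv (Suc k) (s k j b)) V"
  have bC: "b \<in> C k" using Sb nsph_closed by blast
  have V'C: "V' \<in> C (Suc k)" unfolding V'_def using Suc.prems bC by simp
  have f1: "d k (Suc j) V' = iv k b" unfolding V'_def using Suc.prems bC by simp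
  have f2: "\<forall>i\<le>Suc k. i \<noteq> Suc j \<longrightarrow> d k i V' = e k"
  proof (intro allI impI)
    fix i assume i: "i \<le> Suc k" "i \<noteq> Suc j"
    have ds: "d k i (s k j b) = (if i = j then b else e k)"
      using i Suc.prems d_s_nsph[OF Sb] by auto
    show "d k i V' = e k" unfolding V'_def using Suc.prems bC i ds
      by (auto simp: b_def)
  qed
  have "nhtp k (d k (Suc j) V') (e k)"
    using Suc.hyps(1)[of "Suc j" V'] Suc.hyps(2) Suc.prems V'C f2 by simp
  hence "nhtp k (iv k (iv k b)) (iv k (e k))" using f1 nhtp_iv by metis
  thus ?case using bC b_def by simp
qed

lemma nhtp_adjacent_faces: "W \<in> C (Suc k) \<Longrightarrow> a \<le> k \<Longrightarrow> (\<forall>i\<le>Suc k. i \<noteq> a \<and> i \<noteq> Suc a \<longrightarrow> d k i W = e k) \<Longrightarrow>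
   nsph k (d k a W) \<Longrightarrow> nsph k (d k (Suc a) W) \<Longrightarrow> nhtp k (d k a W) (d k (Suc a) W)"
proof -
  assume a: "W \<in> C (Suc k)" "a \<le> k" "\<forall>i\<le>Suc k. i \<noteq> a \<and> i \<noteq> Suc a \<longrightarrow> d k i W = e k"
    "nsph k (d k a W)" "nsph k (d k (Suc a) W)"
  define c where "c = d k a W"
  define c' where "c' = d k (Suc a) W"
  have cC: "c \<in> C k" "c' \<in> C k" using a nsph_closed c_def c'_def by auto
  define W' where "W' = mul (Suc k) W (iv (Suc k) (s k a c'))"
  have W'C: "W' \<in> C (Suc k)" unfolding W'_def using a cC by simp
  have ds: "\<And>i. i \<le> Suc k \<Longrightarrow> d k i (s k a c') = (if i = a \<or> i = Suc a then c' else e k)"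
    using a c'_def d_s_nsph by simp
  have f: "\<forall>i\<le>Suc k. i \<noteq> a \<longrightarrow> d k i W' = e k"
    unfolding W'_def using a cC ds by (auto simp: c'_def)
  have "d k a W' = mul k c (iv k c')" unfolding W'_def using a cC ds by (simp add: c_def)
  hence "nhtp k (mul k c (iv k c')) (e k)" using nhtp_missing_face_e[OF W'C a(2) f] by simp
  thus ?thesis using nhtp_if_nhtp_div_e a c_def c'_def by simp
qed

lemma pt_mul: "a \<in> C 0 \<Longrightarrow> b \<in> C 0 \<Longrightarrow> pt G n (mul 0 a b) = mul n (pt G n a) (pt G n b)"
  by (simp add: pt_def act_mul delta_mor_const)
lemma pt_iv: "a \<in> C 0 \<Longrightarrow> pt G n (iv 0 a) = iv n (pt G n a)"
  by (simp add: pt_def act_iv delta_mor_const)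

definition rebase :: "'a \<Rightarrow> nat \<Rightarrow> 'a \<Rightarrow> 'a" where
  "rebase u k x = mul k x (pt G k (iv 0 u))"

lemma mul_rebase_pt: "u \<in> C 0 \<Longrightarrow> x \<in> C k \<Longrightarrow> mul k (rebase u k x) (pt G k u) = x"
  by (simp add: rebase_def pt_iv)
lemma rebase_mul_pt: "u \<in> C 0 \<Longrightarrow> x \<in> C k \<Longrightarrow> rebase u k (mul k x (pt G k u)) = x"
  by (simp add: rebase_def pt_iv)

lemma sph_iff_nsph_rebase: "u \<in> C 0 \<Longrightarrow> sph G u k x \<longleftrightarrow> x \<in> C k \<and> nsph k (rebase u k x)"
  unfolding rebase_def
proof
  assume u: "u \<in> C 0"
  { assume a: "sph G u k x"
    hence xC: "x \<in> C k" by (simp add: sph_def)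
    have "nsph k (mul k x (pt G k (iv 0 u)))" unfolding nsph_def
    proof (intro conjI allI impI)
      show "mul k x (pt G k (iv 0 u)) \<in> C k" using xC u by simp
      fix j i assume b: "k = Suc j \<and> i \<le> k"
      have "d j i x = pt G j u" using a b by (simp add: sph_def)
      thus "d j i (mul k x (pt G k (iv 0 u))) = e j" using b xC u
        by (simp add: pt_iv[symmetric] pt_mul[symmetric] pt_e)
    qed
    thus "x \<in> C k \<and> nsph k (mul k x (pt G k (iv 0 u)))" using xC by simp }
  { assume a: "x \<in> C k \<and> nsph k (mul k x (pt G k (iv 0 u)))"
    show "sph G u k x" unfolding sph_def
    proof (intro conjI allI impI)
      show "x \<in> C k" using a by simp
      fix j i assume b: "k = Suc j \<and> i \<le> k"
      have "d j i (mul k x (pt G k (iv 0 u))) = e j" using a b nsph_face by blast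
      hence "mul j (d j i x) (pt G j (iv 0 u)) = e j" using a b u by simp
      hence "d j i x = iv j (pt G j (iv 0 u))" using a b u
        by (metis d_closed iv_closed pt_G_closed inv_unique iv_iv)
      thus "d j i x = pt G j u" using u by (simp add: pt_iv)
    qed }
qed

lemma htp_iff_nhtp_rebase:
  assumes u: "u \<in> C 0" and xy: "x \<in> C k" "y \<in> C k"
  shows "htp G u k x y \<longleftrightarrow> nhtp k (rebase u k x) (rebase u k y)"
  unfolding rebase_def
proof
  assume "htp G u k x y"
  then obtain z where z: "z \<in> C (Suc k)" "\<forall>i<k. d k i z = pt G k u" "d k k z = x" "d k (Suc k) z = y"
    unfolding htp_def by blast
  show "nhtp k (mul k x (pt G k (iv 0 u))) (mul k y (pt G k (iv 0 u)))" unfolding nhtp_def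
    by (rule bexI[of _ "mul (Suc k) z (pt G (Suc k) (iv 0 u))"]) (use z u in \<open>auto simp: pt_mul[symmetric] pt_e\<close>)
next
  assume "nhtp k (mul k x (pt G k (iv 0 u))) (mul k y (pt G k (iv 0 u)))"
  then obtain z where z: "z \<in> C (Suc k)" "\<forall>i<k. d k i z = e k" "d k k z = mul k x (pt G k (iv 0 u))"
     "d k (Suc k) z = mul k y (pt G k (iv 0 u))"
    unfolding nhtp_def by blast
  have pu: "mul k (pt G k (iv 0 u)) (pt G k u) = e k" using u by (simp add: pt_mul[symmetric] pt_e)
  show "htp G u k x y" unfolding htp_def
  proof (intro bexI[of _ "mul (Suc k) z (pt G (Suc k) u)"] conjI allI impI)
    show "mul (Suc k) z (pt G (Suc k) u) \<in> C (Suc k)" using z u by simp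
    fix i assume "i < k" thus "d k i (mul (Suc k) z (pt G (Suc k) u)) = pt G k u" using z u by simp
  next
    show "d k k (mul (Suc k) z (pt G (Suc k) u)) = x" using z u xy by (simp add: assoc pu)
  next
    show "d k (Suc k) (mul (Suc k) z (pt G (Suc k) u)) = y" using z u xy by (simp add: assoc pu)
  qed
qed

lemma connected_htp_0:
  assumes conn: "\<forall>x\<in>C 0. htp G (e 0) 0 x (e 0)" and a: "a \<in> C 0" "b \<in> C 0"
  shows "htp G w 0 a b"
proof -
  obtain z1 where z1: "z1 \<in> C (Suc 0)" "d 0 0 z1 = a" "d 0 (Suc 0) z1 = e 0"
    using conn a unfolding htp_def by (auto simp: pt_e)
  obtain z2 where z2: "z2 \<in> C (Suc 0)" "d 0 0 z2 = b" "d 0 (Suc 0) z2 = e 0"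
    using conn a unfolding htp_def by (auto simp: pt_e)
  show ?thesis unfolding htp_def
    by (rule bexI[of _ "mul (Suc 0) (mul (Suc 0) z1 (iv (Suc 0) z2)) (s 0 0 b)"]) (use z1 z2 a in auto)
qed

end

section \<open>Pointed endomorphisms of a simplicial group\<close>

locale pointed_endo = simplicial_group +
  fixes F :: "nat \<Rightarrow> 'a \<Rightarrow> 'a"
  assumes F_smap: "smap G G F" and F_pointed: "F 0 (e 0) = e 0"
begin

lemma F_closed[simp]: "x \<in> C n \<Longrightarrow> F n x \<in> C n"
  using F_smap unfolding smap_def by blast
lemma F_act: "delta_mor m n \<theta> \<Longrightarrow> x \<in> C n \<Longrightarrow> F m (act G m n \<theta> x) = act G m n \<theta> (F n x)"
  using F_smap unfolding smap_def by blast
lemma F_d[simp]: "x \<in> C (Suc n) \<Longrightarrow> F n (d n i x) = d n i (F (Suc n) x)"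
  by (simp add: face_dface F_act delta_mor_dface)
lemma F_pt[simp]: "v \<in> C 0 \<Longrightarrow> F n (pt G n v) = pt G n (F 0 v)"
  by (simp add: pt_def F_act delta_mor_const)
lemma F_e[simp]: "F n (e n) = e n"
  using F_pt[of "e 0" n] by (simp add: pt_e F_pointed)

lemma F_nsph: "nsph k x \<Longrightarrow> nsph k (F k x)"
  unfolding nsph_def by auto (metis F_d F_e)

lemma F_sph: "w \<in> C 0 \<Longrightarrow> sph G w k a \<Longrightarrow> sph G (F 0 w) k (F k a)"
  unfolding sph_def by (auto simp flip: F_d)

lemma F_nhtp: "nhtp k x y \<Longrightarrow> nhtp k (F k x) (F k y)"
  unfolding nhtp_def
proof (elim bexE conjE)
  fix z assume "z \<in> C (Suc k)" and "\<forall>i<k. d k i z = e k" "d k k z = x" "d k (Suc k) z = y"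
  thus "\<exists>z\<in>C (Suc k). (\<forall>i<k. d k i z = e k) \<and> d k k z = F k x \<and> d k (Suc k) z = F k y"
    by (intro bexI[of _ "F (Suc k) z"]) (auto simp flip: F_d)
qed

text \<open>The faces of \<open>s\<^sub>p x \<cdot> s\<^sub>p\<^sub>+\<^sub>1 y\<close> are \<open>x\<close>, \<open>x y\<close>, \<open>y\<close> at \<open>p\<close>, \<open>p + 1\<close>, \<open>p + 2\<close> and trivial
  otherwise; applying \<open>F\<close> and correcting by degeneracies leaves a single nontrivial face.\<close>

lemma F_mul_nhtp:
  assumes x: "nsph (Suc p) x" and y: "nsph (Suc p) y"
  shows "nhtp (Suc p) (F (Suc p) (mul (Suc p) x y)) (mul (Suc p) (F (Suc p) x) (F (Suc p) y))"
proof -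
  let ?k = "Suc p"
  have xC: "x \<in> C ?k" and yC: "y \<in> C ?k" using x y nsph_closed by auto
  define a b c where "a = F ?k x" and "b = F ?k y" and "c = F ?k (mul ?k x y)"
  have abc: "nsph ?k a" "nsph ?k b" "nsph ?k c"
    using x y F_nsph nsph_mul unfolding a_def b_def c_def by auto
  have abcC: "a \<in> C ?k" "b \<in> C ?k" "c \<in> C ?k" using abc nsph_closed by auto
  define w where "w = mul (Suc ?k) (s ?k p x) (s ?k ?k y)"
  have wC: "w \<in> C (Suc ?k)" unfolding w_def using xC yC by simp
  define W where "W = F (Suc ?k) w"
  have WC: "W \<in> C (Suc ?k)" unfolding W_def using wC by simp
  have dW: "d ?k i W = (if i = p then a else if i = ?k then c else if i = Suc ?k then b else e ?k)"
    if "i \<le> Suc ?k" for i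
  proof -
    have "d ?k i W = F ?k (d ?k i w)" unfolding W_def using wC by simp
    thus ?thesis using that xC yC d_s_nsph[OF x, of p i] d_s_nsph[OF y, of ?k i]
      unfolding w_def a_def b_def c_def by auto
  qed
  define V where "V = mul (Suc ?k) (mul (Suc ?k) (iv (Suc ?k) (s ?k p a)) W) (iv (Suc ?k) (s ?k ?k b))"
  have VC: "V \<in> C (Suc ?k)" unfolding V_def using abcC WC by simp
  have dsa: "d ?k i (s ?k p a) = (if i = p \<or> i = ?k then a else e ?k)" if "i \<le> Suc ?k" for i
    using d_s_nsph[OF abc(1) _ that] by simp
  have dsb: "d ?k i (s ?k ?k b) = (if i = ?k \<or> i = Suc ?k then b else e ?k)" if "i \<le> Suc ?k" for i
    using d_s_nsph[OF abc(2) _ that] by simp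
  have fV: "\<forall>i\<le>Suc ?k. i \<noteq> ?k \<longrightarrow> d ?k i V = e ?k"
    unfolding V_def using abcC WC dsa dsb dW by auto
  have "d ?k ?k V = mul ?k (mul ?k (iv ?k a) c) (iv ?k b)"
    unfolding V_def using abcC WC dsa dsb dW by auto
  hence "nhtp ?k (mul ?k (mul ?k (iv ?k a) c) (iv ?k b)) (e ?k)"
    using nhtp_missing_face_e[OF VC _ fV] by simp
  hence "nhtp ?k (mul ?k (mul ?k a (mul ?k (mul ?k (iv ?k a) c) (iv ?k b))) b) (mul ?k (mul ?k a (e ?k)) b)"
    using abc by (intro nhtp_mul nhtp_refl) auto
  thus ?thesis using abcC unfolding a_def b_def c_def by (simp add: assoc)
qed

lemma F_iv_nhtp:
  assumes x: "nsph (Suc p) x"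
  shows "nhtp (Suc p) (F (Suc p) (iv (Suc p) x)) (iv (Suc p) (F (Suc p) x))"
proof -
  let ?k = "Suc p"
  have xC: "x \<in> C ?k" using x nsph_closed by auto
  have Fx: "nsph ?k (F ?k x)" "nsph ?k (F ?k (iv ?k x))" using x nsph_iv F_nsph by auto
  have "nhtp ?k (e ?k) (mul ?k (F ?k x) (F ?k (iv ?k x)))"
    using F_mul_nhtp[OF x nsph_iv[OF x]] xC by simp
  hence "nhtp ?k (mul ?k (iv ?k (F ?k x)) (e ?k)) (mul ?k (iv ?k (F ?k x)) (mul ?k (F ?k x) (F ?k (iv ?k x))))"
    using Fx by (intro nhtp_mul nhtp_refl nsph_iv)
  hence "nhtp ?k (iv ?k (F ?k x)) (F ?k (iv ?k x))" using xC by simp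
  thus ?thesis using Fx nsph_iv nhtp_sym by blast
qed

lemma funpow_nhtp:
  assumes idem: "\<And>y. nsph k y \<Longrightarrow> nhtp k (F k (F k y)) (F k y)" and x: "nsph k x"
  shows "0 < t \<Longrightarrow> nhtp k ((F k ^^ t) x) (F k x)"
proof (induction t)
  case (Suc t)
  show ?case
  proof (cases t)
    case 0 thus ?thesis using x F_nsph nhtp_refl by simp
  next
    case (Suc t')
    hence "nhtp k (F k ((F k ^^ t) x)) (F k (F k x))" using Suc.IH F_nhtp by simp
    thus ?thesis using idem[OF x] nhtp_trans F_nsph x by (simp; blast)
  qed
qed simp

lemma funpow_closed[simp]: "x \<in> C n \<Longrightarrow> (F n ^^ t) x \<in> C n"
  by (induction t) auto
lemma funpow_act: "delta_mor m n \<theta> \<Longrightarrow> x \<in> C n \<Longrightarrow> (F m ^^ t) (act G m n \<theta> x) = act G m n \<theta> ((F n ^^ t) x)"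
  by (induction t) (auto simp: F_act)
lemma funpow_d: "x \<in> C (Suc n) \<Longrightarrow> (F n ^^ t) (d n i x) = d n i ((F (Suc n) ^^ t) x)"
  by (simp add: face_dface funpow_act delta_mor_dface)
lemma funpow_pt: "v \<in> C 0 \<Longrightarrow> (F n ^^ t) (pt G n v) = pt G n ((F 0 ^^ t) v)"
  by (simp add: pt_def funpow_act delta_mor_const)

lemma funpow_e[simp]: "(F n ^^ t) (e n) = e n"
  by (induction t) auto

lemma pointed_endo_funpow: "pointed_endo G mul e (\<lambda>n x. (F n ^^ t) x)"
proof (rule pointed_endo.intro[OF simplicial_group_axioms], rule pointed_endo_axioms.intro)
  show "smap G G (\<lambda>n x. (F n ^^ t) x)" unfolding smap_def by (auto simp: funpow_act)
  show "(F 0 ^^ t) (e 0) = e 0" by simp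
qed

lemma funpow_nsph: "nsph k x \<Longrightarrow> nsph k ((F k ^^ t) x)"
proof -
  interpret I: pointed_endo G mul e "\<lambda>n x. (F n ^^ t) x" by (rule pointed_endo_funpow)
  show "nsph k x \<Longrightarrow> nsph k ((F k ^^ t) x)" using I.F_nsph by simp
qed

lemma funpow_sph: "w \<in> C 0 \<Longrightarrow> sph G w k a \<Longrightarrow> sph G ((F 0 ^^ t) w) k ((F k ^^ t) a)"
proof -
  interpret I: pointed_endo G mul e "\<lambda>n x. (F n ^^ t) x" by (rule pointed_endo_funpow)
  show "w \<in> C 0 \<Longrightarrow> sph G w k a \<Longrightarrow> sph G ((F 0 ^^ t) w) k ((F k ^^ t) a)" using I.F_sph by simp
qed

definition ramp :: "nat \<Rightarrow> nat \<Rightarrow> 'a \<Rightarrow> 'a" where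
  "ramp k a p = act G k (Suc 0) (\<lambda>j. if j < a then 0 else 1) p"

definition F_shift :: "nat \<Rightarrow> 'a \<Rightarrow> 'a \<Rightarrow> 'a" where
  "F_shift k x q = mul k (F k (mul k x q)) (iv k (F k q))"

lemma ramp_closed: "p \<in> C (Suc 0) \<Longrightarrow> ramp k a p \<in> C k"
  unfolding ramp_def using delta_mor_step by simp

lemma ramp_0: "p \<in> C (Suc 0) \<Longrightarrow> ramp k 0 p = pt G k (d 0 0 p)"
  unfolding ramp_def pt_def face_dface
  by (subst sset_act_act[OF sset_G delta_mor_const[OF order_refl] delta_mor_dface]) (auto simp: dface_def)

lemma ramp_Suc_self: "p \<in> C (Suc 0) \<Longrightarrow> ramp k (Suc k) p = pt G k (d 0 (Suc 0) p)"
  unfolding ramp_def pt_def face_dface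
  by (subst sset_act_act[OF sset_G delta_mor_const[OF order_refl] delta_mor_dface]) (auto simp: dface_def)

lemma d_ramp:
  assumes "p \<in> C (Suc 0)" "i = a \<or> i = Suc a"
  shows "d k i (ramp (Suc k) (Suc a) p) = ramp k i p"
  unfolding ramp_def face_dface
  by (rule sset_act_act[OF sset_G delta_mor_dface delta_mor_step]) (use assms in \<open>auto simp: dface_def\<close>)

lemma nsph_F_shift: "nsph k x \<Longrightarrow> q \<in> C k \<Longrightarrow> nsph k (F_shift k x q)"
  unfolding nsph_def F_shift_def by (auto simp flip: F_d simp: nsph_face)

lemma F_shift_ramp_step:
  assumes x: "nsph k x" and p: "p \<in> C (Suc 0)" and a: "a \<le> k"
  shows "nhtp k (F_shift k x (ramp k a p)) (F_shift k x (ramp k (Suc a) p))"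
proof -
  define P where "P = ramp (Suc k) (Suc a) p"
  have xC: "x \<in> C k" and PC: "P \<in> C (Suc k)" using x p ramp_closed nsph_closed unfolding P_def by auto
  define W where "W = F_shift (Suc k) (s k a x) P"
  have WC: "W \<in> C (Suc k)" unfolding W_def F_shift_def using a xC PC by simp
  have dW: "d k i W = F_shift k (d k i (s k a x)) (d k i P)" for i
    unfolding W_def F_shift_def using a xC PC by (simp del: F_d add: F_d[symmetric])
  have "\<forall>i\<le>Suc k. i \<noteq> a \<and> i \<noteq> Suc a \<longrightarrow> d k i W = e k"
    using dW d_s_nsph[OF x a] PC by (simp add: F_shift_def)
  moreover have "d k a W = F_shift k x (ramp k a p)" "d k (Suc a) W = F_shift k x (ramp k (Suc a) p)"
    using dW d_ramp[OF p] a xC unfolding P_def by simp_all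
  ultimately show ?thesis
    using nhtp_adjacent_faces[OF WC a] nsph_F_shift[OF x] ramp_closed[OF p] by simp
qed

text \<open>Connectedness gives a 1-simplex from \<open>u\<close> to \<open>e\<close>; its degeneracies \<open>ramp k a p\<close>
  interpolate between \<open>pt u\<close> (at \<open>a = 0\<close>) and \<open>e\<close> (at \<open>a = k + 1\<close>), and \<open>F_shift k x\<close> changes
  only up to homotopy from one to the next.\<close>

lemma F_translate_nhtp:
  assumes conn: "\<forall>x\<in>C 0. htp G (e 0) 0 x (e 0)" and u: "u \<in> C 0" and x: "nsph k x"
  shows "nhtp k (mul k (F k (mul k x (pt G k u))) (iv k (pt G k (F 0 u)))) (F k x)"
proof -
  obtain p where p: "p \<in> C (Suc 0)" "d 0 0 p = u" "d 0 (Suc 0) p = e 0"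
    using conn u unfolding htp_def by (auto simp: pt_e)
  have "a \<le> Suc k \<Longrightarrow> nhtp k (F_shift k x (ramp k 0 p)) (F_shift k x (ramp k a p))" for a
  proof (induction a)
    case 0 thus ?case using nhtp_refl nsph_F_shift[OF x] ramp_closed[OF p(1)] by blast
  next
    case (Suc a)
    thus ?case using F_shift_ramp_step[OF x p(1), of a] nhtp_trans nsph_F_shift[OF x] ramp_closed[OF p(1)]
      by force
  qed
  from this[of "Suc k"] show ?thesis
    using p u x nsph_closed ramp_0 ramp_Suc_self by (simp add: F_shift_def pt_e)
qed

lemma funpow_translate_nhtp:
  "\<forall>x\<in>C 0. htp G (e 0) 0 x (e 0) \<Longrightarrow> u \<in> C 0 \<Longrightarrow> nsph k x \<Longrightarrow>
   nhtp k (mul k ((F k ^^ t) (mul k x (pt G k u))) (iv k (pt G k ((F 0 ^^ t) u)))) ((F k ^^ t) x)"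
proof -
  interpret I: pointed_endo G mul e "\<lambda>n x. (F n ^^ t) x" by (rule pointed_endo_funpow)
  show "\<forall>x\<in>C 0. htp G (e 0) 0 x (e 0) \<Longrightarrow> u \<in> C 0 \<Longrightarrow> nsph k x \<Longrightarrow> ?thesis"
    using I.F_translate_nhtp by simp
qed

lemma funpow_rebase_nhtp:
  assumes conn: "\<forall>x\<in>C 0. htp G (e 0) 0 x (e 0)" and v: "v \<in> C 0" and x: "sph G v k x"
  shows "nhtp k (rebase ((F 0 ^^ t) v) k ((F k ^^ t) x)) ((F k ^^ t) (rebase v k x))"
proof -
  have xC: "x \<in> C k" and x0: "nsph k (rebase v k x)" using sph_iff_nsph_rebase[OF v] x by auto
  have "mul k (rebase v k x) (pt G k v) = x" using v xC by (rule mul_rebase_pt)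
  with funpow_translate_nhtp[OF conn v x0, of t] show ?thesis
    using v by (simp add: rebase_def[of "(F 0 ^^ t) v"] pt_iv)
qed

end

section \<open>Simplicial groups are Kan complexes\<close>

context simplicial_group
begin

context
  fixes n k :: nat and y :: "nat \<Rightarrow> 'a"
  assumes k: "k \<le> Suc n" and yC: "\<forall>i\<le>Suc n. i \<noteq> k \<longrightarrow> y i \<in> C n"
    and comp: "\<forall>p i j. n = Suc p \<and> i < j \<and> j \<le> Suc n \<and> i \<noteq> k \<and> j \<noteq> k \<longrightarrow> d p i (y j) = d p (j - 1) (y i)"
begin

text \<open>Faces below the missing one are matched from the bottom up, then the faces above it
  from the top down; each correction multiplies by a degeneracy of the current discrepancy,
  which by the compatibility conditions does not disturb the faces already matched.\<close>

lemma horn_fill_lower: "t \<le> k \<Longrightarrow> \<exists>w\<in>C (Suc n). \<forall>j<t. d n j w = y j"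
proof (induction t)
  case 0 show ?case by (rule bexI[of _ "e (Suc n)"]) auto
next
  case (Suc t)
  then obtain w where w: "w \<in> C (Suc n)" "\<forall>j<t. d n j w = y j" by auto
  have tn: "t \<le> n" "t < k" using Suc.prems k by auto
  have yt: "y t \<in> C n" using yC tn by auto
  define u where "u = mul n (iv n (d n t w)) (y t)"
  have uC: "u \<in> C n" unfolding u_def using w yt by simp
  define w' where "w' = mul (Suc n) w (s n t u)"
  have "d n j w' = y j" if j: "j < Suc t" for j
  proof (cases "j = t")
    case True thus ?thesis unfolding w'_def u_def using w yt tn by simp
  next
    case False
    hence jt: "j < t" using j by simp
    then obtain p where np: "n = Suc p" using tn by (cases n) auto
    have yj: "y j \<in> C n" using yC jt tn by auto
    have "d p j u = mul p (iv p (d p j (d n t w))) (d p j (y t))" unfolding u_def using w yt np by simp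
    also have "d p j (d n t w) = d p (t - 1) (y j)" using d_d[of w p j t] w np jt by simp
    also have "d p j (y t) = d p (t - 1) (y j)" using comp np jt tn by auto
    finally have "d p j u = e p" using yj np by simp
    hence "d n j (s n t u) = e n" using d_s_less[of u p j t] uC np jt tn by simp
    thus ?thesis unfolding w'_def using w uC tn jt yj by simp
  qed
  moreover have "w' \<in> C (Suc n)" unfolding w'_def using w uC tn by simp
  ultimately show ?case by blast
qed

lemma horn_fill_upper:
  "r \<le> Suc n - k \<Longrightarrow>
   \<exists>w\<in>C (Suc n). (\<forall>j<k. d n j w = y j) \<and> (\<forall>j. Suc n - r < j \<and> j \<le> Suc n \<longrightarrow> d n j w = y j)"
proof (induction r)
  case 0 thus ?case using horn_fill_lower[OF order_refl] by auto
next
  case (Suc r)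
  then obtain w where w: "w \<in> C (Suc n)" "\<forall>j<k. d n j w = y j"
    "\<forall>j. Suc n - r < j \<and> j \<le> Suc n \<longrightarrow> d n j w = y j" by auto
  define i where "i = Suc n - r"
  have ik: "k < i" "i \<le> Suc n" "0 < i" using Suc.prems i_def by auto
  have yi: "y i \<in> C n" using yC ik by auto
  define u where "u = mul n (iv n (d n i w)) (y i)"
  have uC: "u \<in> C n" unfolding u_def using w yi by simp
  define w' where "w' = mul (Suc n) w (s n (i - 1) u)"
  have lower: "d n j w' = y j" if jk: "j < k" for j
  proof -
    obtain p where np: "n = Suc p" using ik jk by (cases n) auto
    have yj: "y j \<in> C n" using yC jk k by auto
    have "d p j u = mul p (iv p (d p j (d n i w))) (d p j (y i))" unfolding u_def using w yi np by simp
    also have "d p j (d n i w) = d p (i - 1) (y j)" using d_d[of w p j i] w np jk ik by simp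
    also have "d p j (y i) = d p (i - 1) (y j)" using comp np jk ik by auto
    finally have "d p j u = e p" using yj np by simp
    hence "d n j (s n (i - 1) u) = e n" using d_s_less[of u p j "i - 1"] uC np jk ik by simp
    thus ?thesis unfolding w'_def using w uC ik jk yj by simp
  qed
  have upper: "d n j w' = y j" if j: "Suc n - Suc r < j" "j \<le> Suc n" for j
  proof (cases "j = i")
    case True
    have "d n i (s n (i - 1) u) = u" using d_s_Suc_eq[of u n "i - 1"] uC ik by simp
    thus ?thesis unfolding w'_def u_def using True w yi ik by simp
  next
    case False
    hence ji: "i < j" using j i_def ik by auto
    then obtain p where np: "n = Suc p" using ik j by (cases n) auto
    have yj: "y j \<in> C n" using yC ji j ik by auto
    have wj: "d n j w = y j" using w(3) ji j i_def by auto
    have "d p (j - 1) u = mul p (iv p (d p (j - 1) (d n i w))) (d p (j - 1) (y i))"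
      unfolding u_def using w yi np by simp
    also have "d p (j - 1) (d n i w) = d p i (y j)" using d_d[of w p i j] w np ji wj by simp
    also have "d p (j - 1) (y i) = d p i (y j)"
    proof -
      have "i \<noteq> k" "j \<noteq> k" using ji ik by auto
      hence "d p i (y j) = d p (j - 1) (y i)" using comp np ji j by blast
      thus ?thesis by simp
    qed
    finally have "d p (j - 1) u = e p" using yj np by simp
    moreover have "i - 1 \<le> p" using ji j np by linarith
    ultimately have "d n j (s n (i - 1) u) = e n"
      using d_s_greater[of u p "i - 1" j] uC np ji j ik by simp
    thus ?thesis unfolding w'_def using w uC ik wj yj by simp
  qed
  have "w' \<in> C (Suc n)" unfolding w'_def using w uC ik by simp
  thus ?case using lower upper by blast
qed

lemma horn_fill: "\<exists>x\<in>C (Suc n). \<forall>i\<le>Suc n. i \<noteq> k \<longrightarrow> d n i x = y i"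
proof -
  obtain w where "w \<in> C (Suc n)" "\<forall>j<k. d n j w = y j" "\<forall>j. k < j \<and> j \<le> Suc n \<longrightarrow> d n j w = y j"
    using horn_fill_upper[of "Suc n - k"] k by auto
  thus ?thesis by (intro bexI[of _ w]) (auto simp: nat_neq_iff)
qed

end

lemma kan_G: "kan G"
  unfolding kan_def using horn_fill by blast

end

section \<open>Telescopes\<close>

context pointed_endo
begin

abbreviation R where "R n \<equiv> tel_rel G F n"
abbreviation X where "X \<equiv> colim G F"

text \<open>\<open>cls n i x\<close> is the class of the \<open>n\<close>-simplex \<open>x\<close> placed in the \<open>i\<close>-th copy of \<open>G\<close>.\<close>

definition cls :: "nat \<Rightarrow> nat \<Rightarrow> 'a \<Rightarrow> (nat \<times> 'a) set" where
  "cls n i x = R n `` {(i, x)}"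

lemma tel_rel_iff: "((i, x), (j, y)) \<in> R n \<longleftrightarrow> x \<in> C n \<and> y \<in> C n \<and>
   (\<exists>m. i \<le> m \<and> j \<le> m \<and> (F n ^^ (m - i)) x = (F n ^^ (m - j)) y)"
  unfolding tel_rel_def by simp

lemma funpow_eq_mono:
  assumes "i \<le> m" "j \<le> m" "(F n ^^ (m - i)) x = (F n ^^ (m - j)) y" "m \<le> m'"
  shows "(F n ^^ (m' - i)) x = (F n ^^ (m' - j)) y"
proof -
  have "m' - i = (m' - m) + (m - i)" "m' - j = (m' - m) + (m - j)" using assms by auto
  thus ?thesis using assms(3) by (simp only: funpow_add comp_apply)
qed

lemma equiv_tel_rel: "equiv (UNIV \<times> C n) (R n)"
proof (rule equivI)
  show "refl_on (UNIV \<times> C n) (R n)" unfolding refl_on_def by (auto simp: tel_rel_def)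
  show "sym (R n)" unfolding sym_def tel_rel_def by auto
  show "trans (R n)" unfolding trans_def
  proof (intro allI impI)
    fix a b c assume ab: "(a, b) \<in> R n" and bc: "(b, c) \<in> R n"
    obtain i x j y l z where abc: "a = (i, x)" "b = (j, y)" "c = (l, z)" by (cases a; cases b; cases c) auto
    obtain m1 where m1: "i \<le> m1" "j \<le> m1" "(F n ^^ (m1 - i)) x = (F n ^^ (m1 - j)) y"
      using ab abc tel_rel_iff by blast
    obtain m2 where m2: "j \<le> m2" "l \<le> m2" "(F n ^^ (m2 - j)) y = (F n ^^ (m2 - l)) z"
      using bc abc tel_rel_iff by blast
    let ?M = "max m1 m2"
    have "(F n ^^ (?M - i)) x = (F n ^^ (?M - j)) y" using funpow_eq_mono[OF m1] by simp
    also have "\<dots> = (F n ^^ (?M - l)) z" using funpow_eq_mono[OF m2] by simp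
    finally show "(a, c) \<in> R n"
      using ab bc m1 m2 unfolding abc tel_rel_iff by (intro conjI exI[of _ ?M]) auto
  qed
  show "R n \<subseteq> (UNIV \<times> C n) \<times> (UNIV \<times> C n)" by (auto simp: tel_rel_def)
qed

lemma cls_eq_iff: "x \<in> C n \<Longrightarrow> y \<in> C n \<Longrightarrow> cls n i x = cls n j y \<longleftrightarrow> ((i, x), (j, y)) \<in> R n"
  unfolding cls_def using equiv_class_eq_iff[OF equiv_tel_rel[of n], of "(i, x)" "(j, y)"] by auto

lemma cls_eqI: "x \<in> C n \<Longrightarrow> y \<in> C n \<Longrightarrow> i \<le> m \<Longrightarrow> j \<le> m \<Longrightarrow> (F n ^^ (m - i)) x = (F n ^^ (m - j)) y \<Longrightarrow>
   cls n i x = cls n j y"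
  using cls_eq_iff tel_rel_iff by blast

lemma cls_eq_eventually:
  assumes "x \<in> C n" "y \<in> C n" "cls n i x = cls n j y"
  shows "\<forall>\<^sub>F m in sequentially. i \<le> m \<and> j \<le> m \<and> (F n ^^ (m - i)) x = (F n ^^ (m - j)) y"
proof -
  obtain m where m: "i \<le> m" "j \<le> m" "(F n ^^ (m - i)) x = (F n ^^ (m - j)) y"
    using assms cls_eq_iff tel_rel_iff by blast
  show ?thesis unfolding eventually_sequentially using funpow_eq_mono[OF m] m by (intro exI[of _ m]) auto
qed

lemma cls_shift: "x \<in> C n \<Longrightarrow> i \<le> M \<Longrightarrow> cls n i x = cls n M ((F n ^^ (M - i)) x)"
  by (rule cls_eqI[where m=M]) auto

lemma cells_colim: "cells X n = {cls n i x | i x. x \<in> C n}"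
  unfolding colim_def quotient_def cls_def by auto

lemma cls_in_colim[simp]: "x \<in> C n \<Longrightarrow> cls n i x \<in> cells X n"
  unfolding cells_colim by blast

lemma colim_cell_cls: "c \<in> cells X n \<Longrightarrow> \<exists>i x. x \<in> C n \<and> c = cls n i x"
  unfolding cells_colim by blast

lemma act_cls: "delta_mor m n \<theta> \<Longrightarrow> x \<in> C n \<Longrightarrow> act X m n \<theta> (cls n i x) = cls m i (act G m n \<theta> x)"
proof -
  assume th: "delta_mor m n \<theta>" and x: "x \<in> C n"
  have mem: "(i, x) \<in> cls n i x" unfolding cls_def using x by (auto simp: tel_rel_def)
  have each: "cls m j (act G m n \<theta> y) = cls m i (act G m n \<theta> x)" if "(j, y) \<in> cls n i x" for j y
  proof -
    have r: "((i, x), (j, y)) \<in> R n" using that unfolding cls_def by simp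
    then obtain M where M: "i \<le> M" "j \<le> M" "(F n ^^ (M - i)) x = (F n ^^ (M - j)) y" and y: "y \<in> C n"
      using tel_rel_iff by blast
    show ?thesis
      by (rule cls_eqI[where m=M]) (use M th x y in \<open>auto simp: funpow_act\<close>)
  qed
  have "act X m n \<theta> (cls n i x) = \<Union>((\<lambda>(j, y). cls m j (act G m n \<theta> y)) ` cls n i x)"
    by (simp add: colim_def cls_def)
  also have "(\<lambda>(j, y). cls m j (act G m n \<theta> y)) ` cls n i x = {cls m i (act G m n \<theta> x)}"
  proof (intro equalityI subsetI)
    fix c assume "c \<in> (\<lambda>(j, y). cls m j (act G m n \<theta> y)) ` cls n i x"
    then obtain q where q: "q \<in> cls n i x" "c = (\<lambda>(j, y). cls m j (act G m n \<theta> y)) q" by blast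
    obtain j y where "q = (j, y)" by (cases q)
    hence "(j, y) \<in> cls n i x" "c = cls m j (act G m n \<theta> y)" using q by auto
    thus "c \<in> {cls m i (act G m n \<theta> x)}" using each by simp
  next
    fix c assume "c \<in> {cls m i (act G m n \<theta> x)}"
    hence "c = (\<lambda>(j, y). cls m j (act G m n \<theta> y)) (i, x)" by simp
    thus "c \<in> (\<lambda>(j, y). cls m j (act G m n \<theta> y)) ` cls n i x" using mem by blast
  qed
  also have "\<Union>{cls m i (act G m n \<theta> x)} = cls m i (act G m n \<theta> x)" by simp
  finally show ?thesis .
qed

lemma sset_colim: "sset X"
  unfolding sset_def
proof (intro conjI allI impI)
  fix m n \<theta> c assume a: "delta_mor m n \<theta> \<and> c \<in> cells X n"
  then obtain i x where "x \<in> C n" "c = cls n i x" using colim_cell_cls by blast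
  thus "act X m n \<theta> c \<in> cells X m" using a by (simp add: act_cls)
next
  fix n c assume "c \<in> cells X n"
  then obtain i x where "x \<in> C n" "c = cls n i x" using colim_cell_cls by blast
  moreover have "delta_mor n n id" by (simp add: delta_mor_def)
  ultimately show "act X n n id c = c" by (simp add: act_cls sset_G sset_act_id)
next
  fix l m n \<theta> \<phi> c assume a: "delta_mor l m \<theta> \<and> delta_mor m n \<phi> \<and> c \<in> cells X n"
  then obtain i x where "x \<in> C n" "c = cls n i x" using colim_cell_cls by blast
  thus "act X l m \<theta> (act X m n \<phi> c) = act X l n (\<phi> \<circ> \<theta>) c"
    using a act_cls[OF delta_mor_comp[of l m \<theta> n \<phi>]] by (simp add: act_cls sset_G sset_act_comp)
next
  fix m n \<theta> \<theta>' c assume a: "delta_mor m n \<theta> \<and> (\<forall>i\<le>m. \<theta> i = \<theta>' i) \<and> c \<in> cells X n"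
  then obtain i x where x: "x \<in> C n" "c = cls n i x" using colim_cell_cls by blast
  have "act G m n \<theta> x = act G m n \<theta>' x" using a x sset_act_cong[OF sset_G] by blast
  moreover have "delta_mor m n \<theta>'" using a delta_mor_cong by blast
  ultimately show "act X m n \<theta> c = act X m n \<theta>' c" using a x by (simp add: act_cls)
qed

lemma face_cls: "x \<in> C (Suc n) \<Longrightarrow> face X n l (cls (Suc n) i x) = cls n i (d n l x)"
  by (simp add: face_dface act_cls delta_mor_dface)
lemma pt_cls: "v \<in> C 0 \<Longrightarrow> pt X n (cls 0 i v) = cls n i (pt G n v)"
  by (simp add: pt_def act_cls delta_mor_const)
lemma colim_in_cls: "colim_in G F n x = cls n 0 x"
  by (simp add: colim_in_def cls_def)

lemma colim_family_common_stage:
  assumes "finite I" "\<forall>i\<in>I. c i \<in> cells X n"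
  shows "\<exists>M a. \<forall>i\<in>I. a i \<in> C n \<and> c i = cls n M (a i)"
proof -
  have "\<forall>i\<in>I. \<exists>q. snd q \<in> C n \<and> c i = cls n (fst q) (snd q)"
    using assms(2) colim_cell_cls by fastforce
  then obtain q where q: "\<forall>i\<in>I. snd (q i) \<in> C n \<and> c i = cls n (fst (q i)) (snd (q i))"
    by (metis bchoice)
  define M where "M = Max (fst ` q ` I)"
  have "fst (q i) \<le> M" if "i \<in> I" for i unfolding M_def using assms(1) that by simp
  hence "\<forall>i\<in>I. (F n ^^ (M - fst (q i))) (snd (q i)) \<in> C n \<and>
      c i = cls n M ((F n ^^ (M - fst (q i))) (snd (q i)))"
    using q cls_shift by simp
  thus ?thesis by (intro exI[of _ M] exI[of _ "\<lambda>i. (F n ^^ (M - fst (q i))) (snd (q i))"])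
qed

text \<open>Compatibility of a horn in the telescope holds at some finite stage, because each
  of the finitely many face identities does.\<close>

lemma colim_horn_compatible_stage:
  assumes a: "\<forall>i\<le>Suc n. i \<noteq> k \<longrightarrow> a i \<in> C n"
    and comp: "\<forall>p i j. n = Suc p \<and> i < j \<and> j \<le> Suc n \<and> i \<noteq> k \<and> j \<noteq> k \<longrightarrow>
      cls p M (d p i (a j)) = cls p M (d p (j - 1) (a i))"
  shows "\<exists>m\<ge>M. \<forall>p i j. n = Suc p \<and> i < j \<and> j \<le> Suc n \<and> i \<noteq> k \<and> j \<noteq> k \<longrightarrow>
      d p i ((F n ^^ (m - M)) (a j)) = d p (j - 1) ((F n ^^ (m - M)) (a i))"
proof (cases n)
  case (Suc p)
  define L where "L = {(i, j). i < j \<and> j \<le> Suc n \<and> i \<noteq> k \<and> j \<noteq> k}"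
  have "finite L" unfolding L_def by (rule finite_subset[of _ "{..Suc n} \<times> {..Suc n}"]) auto
  moreover have "\<forall>(i, j)\<in>L. \<forall>\<^sub>F m in sequentially.
      (F p ^^ (m - M)) (d p i (a j)) = (F p ^^ (m - M)) (d p (j - 1) (a i))"
  proof clarify
    fix i j assume "(i, j) \<in> L"
    hence ij: "i < j" "j \<le> Suc n" "i \<noteq> k" "j \<noteq> k" unfolding L_def by auto
    hence aC: "a j \<in> C (Suc p)" "a i \<in> C (Suc p)" using a Suc by auto
    have "cls p M (d p i (a j)) = cls p M (d p (j - 1) (a i))" using comp ij Suc by blast
    from cls_eq_eventually[OF d_closed[OF aC(1)] d_closed[OF aC(2)] this]
    show "\<forall>\<^sub>F m in sequentially. (F p ^^ (m - M)) (d p i (a j)) = (F p ^^ (m - M)) (d p (j - 1) (a i))"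
      by (rule eventually_mono) simp
  qed
  ultimately have "\<forall>\<^sub>F m in sequentially. \<forall>(i, j)\<in>L.
      (F p ^^ (m - M)) (d p i (a j)) = (F p ^^ (m - M)) (d p (j - 1) (a i))"
    by (simp add: eventually_ball_finite split_def)
  then obtain N where N: "\<forall>m\<ge>N. \<forall>(i, j)\<in>L.
      (F p ^^ (m - M)) (d p i (a j)) = (F p ^^ (m - M)) (d p (j - 1) (a i))"
    unfolding eventually_sequentially by blast
  hence eq: "\<forall>(i, j)\<in>L. (F p ^^ (max N M - M)) (d p i (a j)) = (F p ^^ (max N M - M)) (d p (j - 1) (a i))"
    by simp
  show ?thesis
  proof (intro exI[of _ "max N M"] conjI allI impI)
    fix p' i j assume h: "n = Suc p' \<and> i < j \<and> j \<le> Suc n \<and> i \<noteq> k \<and> j \<noteq> k"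
    hence "p' = p" "(i, j) \<in> L" "a i \<in> C n" "a j \<in> C n" using Suc a unfolding L_def by auto
    with eq Suc show "d p' i ((F n ^^ (max N M - M)) (a j)) = d p' (j - 1) ((F n ^^ (max N M - M)) (a i))"
      by (auto simp: funpow_d)
  qed simp
qed auto

lemma kan_colim: "kan X"
  unfolding kan_def
proof (intro allI impI, elim conjE)
  fix n k y
  assume k: "k \<le> Suc n" and yX: "\<forall>i\<le>Suc n. i \<noteq> k \<longrightarrow> y i \<in> cells X n"
    and comp: "\<forall>p i j. n = Suc p \<and> i < j \<and> j \<le> Suc n \<and> i \<noteq> k \<and> j \<noteq> k \<longrightarrow>
             face X p i (y j) = face X p (j - 1) (y i)"
  obtain M a where a: "\<forall>i\<in>{i. i \<le> Suc n \<and> i \<noteq> k}. a i \<in> C n \<and> y i = cls n M (a i)"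
    using colim_family_common_stage[of "{i. i \<le> Suc n \<and> i \<noteq> k}" y n] yX by auto
  hence aC: "\<forall>i\<le>Suc n. i \<noteq> k \<longrightarrow> a i \<in> C n" by simp
  have "\<forall>p i j. n = Suc p \<and> i < j \<and> j \<le> Suc n \<and> i \<noteq> k \<and> j \<noteq> k \<longrightarrow>
      cls p M (d p i (a j)) = cls p M (d p (j - 1) (a i))"
  proof (intro allI impI)
    fix p i j assume h: "n = Suc p \<and> i < j \<and> j \<le> Suc n \<and> i \<noteq> k \<and> j \<noteq> k"
    hence "face X p i (y j) = face X p (j - 1) (y i)" using comp by blast
    moreover have "a i \<in> C (Suc p)" "y i = cls (Suc p) M (a i)" "a j \<in> C (Suc p)" "y j = cls (Suc p) M (a j)"
      using a h by auto
    ultimately show "cls p M (d p i (a j)) = cls p M (d p (j - 1) (a i))" by (simp add: face_cls)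
  qed
  then obtain m where m: "M \<le> m" and comp': "\<forall>p i j. n = Suc p \<and> i < j \<and> j \<le> Suc n \<and> i \<noteq> k \<and> j \<noteq> k \<longrightarrow>
      d p i ((F n ^^ (m - M)) (a j)) = d p (j - 1) ((F n ^^ (m - M)) (a i))"
    using colim_horn_compatible_stage[OF aC] by blast
  have bC: "\<forall>i\<le>Suc n. i \<noteq> k \<longrightarrow> (F n ^^ (m - M)) (a i) \<in> C n" using aC by simp
  obtain x where x: "x \<in> C (Suc n)" "\<forall>i\<le>Suc n. i \<noteq> k \<longrightarrow> d n i x = (F n ^^ (m - M)) (a i)"
    using horn_fill[OF k bC comp'] by blast
  have "face X n i (cls (Suc n) m x) = y i" if "i \<le> Suc n" "i \<noteq> k" for i
    using x a that m cls_shift[of "a i" n M m] by (simp add: face_cls)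
  thus "\<exists>x\<in>cells X (Suc n). \<forall>i\<le>Suc n. i \<noteq> k \<longrightarrow> face X n i x = y i"
    using x(1) by (intro bexI[of _ "cls (Suc n) m x"]) auto
qed

lemma htp_cls:
  assumes u: "u \<in> C 0" and h: "htp G u k a b"
  shows "htp X (cls 0 M u) k (cls k M a) (cls k M b)"
proof -
  obtain z where z: "z \<in> C (Suc k)" "\<forall>i<k. d k i z = pt G k u" "d k k z = a" "d k (Suc k) z = b"
    using h unfolding htp_def by blast
  show ?thesis unfolding htp_def
    by (rule bexI[of _ "cls (Suc k) M z"]) (use z u in \<open>auto simp: face_cls pt_cls\<close>)
qed

lemma sph_colim_cls:
  assumes v: "v \<in> C 0" and c: "sph X (cls 0 0 v) k c"
  shows "\<exists>M a. a \<in> C k \<and> c = cls k M a \<and> sph G ((F 0 ^^ M) v) k a"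
proof -
  have "c \<in> cells X k" using c by (simp add: sph_def)
  then obtain i a0 where a0: "a0 \<in> C k" "c = cls k i a0" using colim_cell_cls by blast
  have "\<forall>l\<in>{..k}. \<forall>\<^sub>F m in sequentially. i \<le> m \<and>
      (\<forall>j. k = Suc j \<longrightarrow> (F j ^^ (m - i)) (d j l a0) = (F j ^^ m) (pt G j v))"
  proof (intro ballI, cases k)
    fix l assume l: "l \<in> {..k}"
    fix j assume j: "k = Suc j"
    have "face X j l c = pt X j (cls 0 0 v)" using c j l by (simp add: sph_def)
    hence "cls j i (d j l a0) = cls j 0 (pt G j v)" using a0 j v by (simp add: face_cls pt_cls)
    from cls_eq_eventually[OF _ _ this] show "\<forall>\<^sub>F m in sequentially. i \<le> m \<and>
        (\<forall>j. k = Suc j \<longrightarrow> (F j ^^ (m - i)) (d j l a0) = (F j ^^ m) (pt G j v))"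
      using a0 j v by (auto elim: eventually_mono)
  qed (simp add: eventually_ge_at_top)
  hence "\<forall>\<^sub>F m in sequentially. \<forall>l\<in>{..k}. i \<le> m \<and>
      (\<forall>j. k = Suc j \<longrightarrow> (F j ^^ (m - i)) (d j l a0) = (F j ^^ m) (pt G j v))"
    by (simp add: eventually_ball_finite)
  then obtain m where m: "i \<le> m" and
    meq: "\<forall>l\<le>k. \<forall>j. k = Suc j \<longrightarrow> (F j ^^ (m - i)) (d j l a0) = (F j ^^ m) (pt G j v)"
    unfolding eventually_sequentially by (metis atMost_iff order_refl)
  define a where "a = (F k ^^ (m - i)) a0"
  have "sph G ((F 0 ^^ m) v) k a"
    unfolding sph_def a_def using meq a0 v by (auto simp: funpow_d funpow_pt)
  moreover have "c = cls k m a" unfolding a_def using a0 m cls_shift by simp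
  moreover have "a \<in> C k" unfolding a_def using a0 by simp
  ultimately show ?thesis by blast
qed

lemma htp_colim_eventually:
  assumes v: "v \<in> C 0" and x: "x \<in> C k" "x' \<in> C k"
    and h: "htp X (cls 0 0 v) k (cls k 0 x) (cls k 0 x')"
  shows "\<forall>\<^sub>F m in sequentially. htp G ((F 0 ^^ m) v) k ((F k ^^ m) x) ((F k ^^ m) x')"
proof -
  obtain z where z: "z \<in> cells X (Suc k)" "\<forall>i<k. face X k i z = pt X k (cls 0 0 v)"
    "face X k k z = cls k 0 x" "face X k (Suc k) z = cls k 0 x'" using h unfolding htp_def by blast
  obtain i z0 where z0: "z0 \<in> C (Suc k)" "z = cls (Suc k) i z0" using colim_cell_cls[OF z(1)] by blast
  define tgt where "tgt l = (if l < k then pt G k v else if l = k then x else x')" for l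
  have tC: "tgt l \<in> C k" for l unfolding tgt_def using v x by simp
  have feq: "cls k i (d k l z0) = cls k 0 (tgt l)" if "l \<le> Suc k" for l
  proof -
    have "l < k \<or> l = k \<or> l = Suc k" using that by auto
    thus ?thesis using z z0 v unfolding tgt_def by (elim disjE) (auto simp: face_cls pt_cls)
  qed
  have "\<forall>l\<in>{..Suc k}. \<forall>\<^sub>F m in sequentially. i \<le> m \<and> (F k ^^ (m - i)) (d k l z0) = (F k ^^ m) (tgt l)"
  proof
    fix l assume "l \<in> {..Suc k}"
    from cls_eq_eventually[OF d_closed[OF z0(1)] tC feq] this
    show "\<forall>\<^sub>F m in sequentially. i \<le> m \<and> (F k ^^ (m - i)) (d k l z0) = (F k ^^ m) (tgt l)"
      by (auto elim: eventually_mono)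
  qed
  hence "\<forall>\<^sub>F m in sequentially. \<forall>l\<in>{..Suc k}. i \<le> m \<and> (F k ^^ (m - i)) (d k l z0) = (F k ^^ m) (tgt l)"
    by (simp add: eventually_ball_finite)
  thus ?thesis
  proof (rule eventually_mono)
    fix m assume "\<forall>l\<in>{..Suc k}. i \<le> m \<and> (F k ^^ (m - i)) (d k l z0) = (F k ^^ m) (tgt l)"
    hence dz: "d k l ((F (Suc k) ^^ (m - i)) z0) = (F k ^^ m) (tgt l)" if "l \<le> Suc k" for l
      using that z0 by (auto simp: funpow_d)
    show "htp G ((F 0 ^^ m) v) k ((F k ^^ m) x) ((F k ^^ m) x')"
      unfolding htp_def
    proof (intro bexI conjI allI impI)
      fix l assume "l < k"
      thus "d k l ((F (Suc k) ^^ (m - i)) z0) = pt G k ((F 0 ^^ m) v)"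
        using dz[of l] v by (simp add: tgt_def funpow_pt)
    qed (use dz[of k] dz[of "Suc k"] z0 in \<open>simp_all add: tgt_def\<close>)
  qed
qed

end

section \<open>Products\<close>

lemma cells_sprod[simp]: "cells (sprod A B) n = cells A n \<times> cells B n"
  by (simp add: sprod_def)
lemma act_sprod[simp]: "act (sprod A B) m n \<theta> (a, b) = (act A m n \<theta> a, act B m n \<theta> b)"
  by (simp add: sprod_def)
lemma face_sprod[simp]: "face (sprod A B) n i (a, b) = (face A n i a, face B n i b)"
  by (simp add: face_def)
lemma pt_sprod[simp]: "pt (sprod A B) n (a, b) = (pt A n a, pt B n b)"
  by (simp add: pt_def)

lemma sset_sprod: "sset A \<Longrightarrow> sset B \<Longrightarrow> sset (sprod A B)"
  unfolding sset_def by (auto simp: sprod_def split: prod.splits)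

lemma sph_sprod: "sph (sprod A B) (a, b) k (x, y) \<longleftrightarrow> sph A a k x \<and> sph B b k y"
  unfolding sph_def by auto

lemma htp_sprod: "htp (sprod A B) (a, b) k (x, y) (x', y') \<longleftrightarrow> htp A a k x x' \<and> htp B b k y y'"
proof
  assume "htp (sprod A B) (a, b) k (x, y) (x', y')"
  then obtain z where "z \<in> cells (sprod A B) (Suc k)" "\<forall>i<k. face (sprod A B) k i z = pt (sprod A B) k (a, b)"
    "face (sprod A B) k k z = (x, y)" "face (sprod A B) k (Suc k) z = (x', y')" unfolding htp_def by blast
  moreover obtain z1 z2 where "z = (z1, z2)" by (cases z)
  ultimately show "htp A a k x x' \<and> htp B b k y y'" unfolding htp_def by auto
next
  assume "htp A a k x x' \<and> htp B b k y y'"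
  then obtain z1 z2 where
    "z1 \<in> cells A (Suc k)" "\<forall>i<k. face A k i z1 = pt A k a" "face A k k z1 = x" "face A k (Suc k) z1 = x'"
    "z2 \<in> cells B (Suc k)" "\<forall>i<k. face B k i z2 = pt B k b" "face B k k z2 = y" "face B k (Suc k) z2 = y'"
    unfolding htp_def by blast
  thus "htp (sprod A B) (a, b) k (x, y) (x', y')" unfolding htp_def by (intro bexI[of _ "(z1, z2)"]) auto
qed

lemma kan_sprod:
  assumes kA: "kan A" and kB: "kan B"
  shows "kan (sprod A B)"
  unfolding kan_def
proof (intro allI impI, elim conjE)
  fix n k y
  assume k: "k \<le> Suc n" and yC: "\<forall>i\<le>Suc n. i \<noteq> k \<longrightarrow> y i \<in> cells (sprod A B) n"
    and comp: "\<forall>p i j. n = Suc p \<and> i < j \<and> j \<le> Suc n \<and> i \<noteq> k \<and> j \<noteq> k \<longrightarrow>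
       face (sprod A B) p i (y j) = face (sprod A B) p (j - 1) (y i)"
  have fs: "face (sprod A B) p i c = (face A p i (fst c), face B p i (snd c))" for p i c
    by (cases c) simp
  have "\<forall>p i j. n = Suc p \<and> i < j \<and> j \<le> Suc n \<and> i \<noteq> k \<and> j \<noteq> k \<longrightarrow>
      face A p i (fst (y j)) = face A p (j - 1) (fst (y i))" using comp fs by (metis fst_conv)
  moreover have "\<forall>i\<le>Suc n. i \<noteq> k \<longrightarrow> fst (y i) \<in> cells A n" using yC by (auto simp: mem_Times_iff)
  ultimately obtain x1 where x1: "x1 \<in> cells A (Suc n)" "\<forall>i\<le>Suc n. i \<noteq> k \<longrightarrow> face A n i x1 = fst (y i)"
    using kA[unfolded kan_def, rule_format, of k n "\<lambda>i. fst (y i)"] k by blast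
  have "\<forall>p i j. n = Suc p \<and> i < j \<and> j \<le> Suc n \<and> i \<noteq> k \<and> j \<noteq> k \<longrightarrow>
      face B p i (snd (y j)) = face B p (j - 1) (snd (y i))" using comp fs by (metis snd_conv)
  moreover have "\<forall>i\<le>Suc n. i \<noteq> k \<longrightarrow> snd (y i) \<in> cells B n" using yC by (auto simp: mem_Times_iff)
  ultimately obtain x2 where x2: "x2 \<in> cells B (Suc n)" "\<forall>i\<le>Suc n. i \<noteq> k \<longrightarrow> face B n i x2 = snd (y i)"
    using kB[unfolded kan_def, rule_format, of k n "\<lambda>i. snd (y i)"] k by blast
  show "\<exists>x\<in>cells (sprod A B) (Suc n). \<forall>i\<le>Suc n. i \<noteq> k \<longrightarrow> face (sprod A B) n i x = y i"
    using x1 x2 by (intro bexI[of _ "(x1, x2)"]) (auto simp: prod_eq_iff)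
qed

section \<open>Homotopy of a telescope\<close>

context pointed_endo
begin

lemma colim_connected:
  assumes conn: "\<forall>x\<in>C 0. htp G (e 0) 0 x (e 0)" and c: "c \<in> cells X 0"
  shows "htp X w 0 (cls 0 0 (e 0)) c"
proof -
  obtain i a where a: "a \<in> C 0" "c = cls 0 i a" using colim_cell_cls[OF c] by blast
  have "cls 0 0 (e 0) = cls 0 i (e 0)" using cls_shift[of "e 0" 0 0 i] by simp
  moreover have "htp X (cls 0 i (e 0)) 0 (cls 0 i (e 0)) (cls 0 i a)"
    using htp_cls[OF e_closed connected_htp_0[OF conn e_closed a(1)]] .
  ultimately show ?thesis using a htp_0_basepoint by metis
qed

text \<open>Classes of spheres at stages \<open>0\<close> and \<open>M\<close> of the telescope are homotopic as soon as
  their rebased representatives become homotopic after one application of \<open>F\<close>, because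
  \<open>F\<^sup>M\<^sup>+\<^sup>1\<close> and \<open>F\<close> agree on \<open>\<pi>\<^sub>k\<close> for an idempotent \<open>F\<^sub>*\<close>.\<close>

lemma htp_colim_of_F_nhtp:
  assumes conn: "\<forall>x\<in>C 0. htp G (e 0) 0 x (e 0)"
    and idem: "\<And>y. nsph k y \<Longrightarrow> nhtp k (F k (F k y)) (F k y)"
    and v: "v \<in> C 0" and x: "sph G v k x" and a: "sph G ((F 0 ^^ M) v) k a"
    and h: "nhtp k (F k (rebase v k x)) (F k (rebase ((F 0 ^^ M) v) k a))"
  shows "htp X (cls 0 0 v) k (cls k 0 x) (cls k M a)"
proof -
  define w where "w = (F 0 ^^ M) v"
  define u where "u = (F 0 ^^ Suc M) v"
  have wC: "w \<in> C 0" and uC: "u \<in> C 0" and uw: "u = F 0 w" using v unfolding w_def u_def by auto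
  have xC: "x \<in> C k" and aC: "a \<in> C k" using x a by (auto simp: sph_def)
  have x0: "nsph k (rebase v k x)" and a0: "nsph k (rebase w k a)"
    using x a v wC sph_iff_nsph_rebase unfolding w_def by auto
  have T1: "nhtp k (rebase u k ((F k ^^ Suc M) x)) ((F k ^^ Suc M) (rebase v k x))"
    using funpow_rebase_nhtp[OF conn v x] unfolding u_def .
  have T1S: "nsph k (rebase u k ((F k ^^ Suc M) x))"
    using funpow_sph[OF v x] sph_iff_nsph_rebase[OF uC] unfolding u_def by blast
  have T2S: "nsph k (rebase u k (F k a))"
    using F_sph[OF wC] a sph_iff_nsph_rebase[OF uC] uw unfolding w_def by auto
  have "nhtp k (rebase u k (F k a)) (F k (rebase w k a))"
    using funpow_rebase_nhtp[OF conn wC a[folded w_def], of 1] uw by simp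
  hence T2: "nhtp k (F k (rebase w k a)) (rebase u k (F k a))"
    using nhtp_sym T2S F_nsph[OF a0] by blast
  have "nhtp k ((F k ^^ Suc M) (rebase v k x)) (rebase u k (F k a))"
    by (rule nhtp_trans[OF F_nsph[OF x0] funpow_nhtp[OF idem x0 zero_less_Suc]
          nhtp_trans[OF F_nsph[OF a0] h[folded w_def] T2]])
  hence "nhtp k (rebase u k ((F k ^^ Suc M) x)) (rebase u k (F k a))"
    by (rule nhtp_trans[OF funpow_nsph[OF x0] T1])
  hence "htp G u k ((F k ^^ Suc M) x) (F k a)" using htp_iff_nhtp_rebase[OF uC] xC aC by simp
  from htp_cls[OF uC this, of "Suc M"] show ?thesis
    using cls_shift[OF v, of 0 "Suc M"] cls_shift[OF xC, of 0 "Suc M"] cls_shift[OF aC, of M "Suc M"]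
    unfolding u_def by simp
qed

lemma F_nhtp_of_htp_colim:
  assumes conn: "\<forall>x\<in>C 0. htp G (e 0) 0 x (e 0)"
    and idem: "\<And>y. nsph k y \<Longrightarrow> nhtp k (F k (F k y)) (F k y)"
    and v: "v \<in> C 0" and x: "sph G v k x" and x': "sph G v k x'"
    and h: "htp X (cls 0 0 v) k (cls k 0 x) (cls k 0 x')"
  shows "nhtp k (F k (rebase v k x)) (F k (rebase v k x'))"
proof -
  have xC: "x \<in> C k" "x' \<in> C k" using x x' by (auto simp: sph_def)
  have x0: "nsph k (rebase v k x)" "nsph k (rebase v k x')" using sph_iff_nsph_rebase[OF v] x x' by auto
  obtain N where "\<forall>m\<ge>N. htp G ((F 0 ^^ m) v) k ((F k ^^ m) x) ((F k ^^ m) x')"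
    using htp_colim_eventually[OF v xC h] unfolding eventually_sequentially by blast
  moreover have "N \<le> Suc N" by simp
  moreover define u where "u = (F 0 ^^ Suc N) v"
  ultimately have "htp G u k ((F k ^^ Suc N) x) ((F k ^^ Suc N) x')" by blast
  hence T: "nhtp k (rebase u k ((F k ^^ Suc N) x)) (rebase u k ((F k ^^ Suc N) x'))"
    using htp_iff_nhtp_rebase v xC unfolding u_def by simp
  have uC: "u \<in> C 0" using v unfolding u_def by simp
  have TS: "nsph k (rebase u k ((F k ^^ Suc N) x))" "nsph k (rebase u k ((F k ^^ Suc N) x'))"
    using funpow_sph[OF v x] funpow_sph[OF v x'] sph_iff_nsph_rebase[OF uC] unfolding u_def by blast+
  have Tx: "nhtp k (rebase u k ((F k ^^ Suc N) x)) ((F k ^^ Suc N) (rebase v k x))"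
    and Tx': "nhtp k (rebase u k ((F k ^^ Suc N) x')) ((F k ^^ Suc N) (rebase v k x'))"
    using funpow_rebase_nhtp[OF conn v x] funpow_rebase_nhtp[OF conn v x'] unfolding u_def by blast+
  have FS: "nsph k ((F k ^^ Suc N) (rebase v k x))" "nsph k (F k (rebase v k x))"
    using funpow_nsph F_nsph x0 by auto
  have "nhtp k ((F k ^^ Suc N) (rebase v k x)) ((F k ^^ Suc N) (rebase v k x'))"
    using nhtp_trans[OF TS(1) nhtp_sym[OF TS(1) FS(1) Tx] nhtp_trans[OF TS(2) T Tx']] .
  hence "nhtp k (F k (rebase v k x)) ((F k ^^ Suc N) (rebase v k x'))"
    using nhtp_trans[OF FS(1) nhtp_sym[OF FS(1) FS(2) funpow_nhtp[OF idem x0(1) zero_less_Suc]]] by blast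
  thus ?thesis using nhtp_trans[OF funpow_nsph[OF x0(2)] _ funpow_nhtp[OF idem x0(2) zero_less_Suc]] by blast
qed

end

section \<open>The splitting\<close>

locale idempotent_endo = simplicial_group +
  fixes f g :: "nat \<Rightarrow> 'a \<Rightarrow> 'a"
  assumes f_smap: "smap G G f" and f_pointed: "f 0 (e 0) = e 0"
    and connected: "\<forall>x\<in>C 0. htp G (e 0) 0 x (e 0)"
    and f_idem: "\<forall>k x. sph G (e 0) k x \<longrightarrow> htp G (e 0) k (f k (f k x)) (f k x)"
    and g_def: "g = (\<lambda>n x. mul n x (iv n (f n x)))"

sublocale idempotent_endo \<subseteq> A: pointed_endo G mul e f
  by (rule pointed_endo.intro[OF simplicial_group_axioms pointed_endo_axioms.intro[of G f e, OF f_smap f_pointed]])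

lemma (in idempotent_endo) g_smap: "smap G G g"
  unfolding smap_def g_def by (simp add: act_mul act_iv A.F_act)

sublocale idempotent_endo \<subseteq> B: pointed_endo G mul e g
  by (rule pointed_endo.intro[OF simplicial_group_axioms pointed_endo_axioms.intro[of G g e, OF g_smap]])
    (simp add: g_def f_pointed)

context idempotent_endo
begin

lemma f_idem_nhtp: "nsph k x \<Longrightarrow> nhtp k (f k (f k x)) (f k x)"
  using f_idem by (simp add: sph_e_iff htp_e_iff)

lemma g_mul_f: "x \<in> C k \<Longrightarrow> mul k (g k x) (f k x) = x"
  by (simp add: g_def)

lemma f_g_nhtp_e:
  assumes x: "nsph (Suc p) x"
  shows "nhtp (Suc p) (f (Suc p) (g (Suc p) x)) (e (Suc p))"
proof -
  let ?k = "Suc p"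
  have fx: "nsph ?k (f ?k x)" "nsph ?k (f ?k (f ?k x))" using x A.F_nsph by auto
  have "nhtp ?k (f ?k (g ?k x)) (mul ?k (f ?k x) (f ?k (iv ?k (f ?k x))))"
    unfolding g_def using A.F_mul_nhtp[OF x nsph_iv[OF fx(1)]] by simp
  moreover have "nhtp ?k (mul ?k (f ?k x) (f ?k (iv ?k (f ?k x)))) (mul ?k (f ?k x) (iv ?k (f ?k (f ?k x))))"
    using A.F_iv_nhtp[OF fx(1)] nhtp_refl[OF fx(1)] nhtp_mul by blast
  moreover have "nhtp ?k (mul ?k (f ?k x) (iv ?k (f ?k (f ?k x)))) (mul ?k (f ?k x) (iv ?k (f ?k x)))"
    using f_idem_nhtp[OF x] nhtp_refl[OF fx(1)] nhtp_mul nhtp_iv by blast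
  moreover have "nsph ?k (mul ?k (f ?k x) (f ?k (iv ?k (f ?k x))))"
    "nsph ?k (mul ?k (f ?k x) (iv ?k (f ?k (f ?k x))))"
    using fx nsph_mul nsph_iv A.F_nsph by blast+
  ultimately have "nhtp ?k (f ?k (g ?k x)) (mul ?k (f ?k x) (iv ?k (f ?k x)))" using nhtp_trans by blast
  thus ?thesis using fx nsph_closed by simp
qed

lemma g_idem_nhtp:
  assumes x: "nsph (Suc p) x"
  shows "nhtp (Suc p) (g (Suc p) (g (Suc p) x)) (g (Suc p) x)"
proof -
  let ?k = "Suc p"
  have gx: "nsph ?k (g ?k x)" using x B.F_nsph by blast
  have "nhtp ?k (mul ?k (g ?k x) (iv ?k (f ?k (g ?k x)))) (mul ?k (g ?k x) (iv ?k (e ?k)))"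
    using nhtp_mul[OF nhtp_refl[OF gx] nhtp_iv[OF f_g_nhtp_e[OF x]]] .
  thus ?thesis using gx nsph_closed by (simp add: g_def[symmetric]) (simp add: g_def)
qed

lemma g_f_nhtp_e:
  assumes x: "nsph (Suc p) x"
  shows "nhtp (Suc p) (g (Suc p) (f (Suc p) x)) (e (Suc p))"
proof -
  let ?k = "Suc p"
  have fx: "nsph ?k (f ?k x)" using x A.F_nsph by blast
  have "nhtp ?k (mul ?k (f ?k x) (iv ?k (f ?k (f ?k x)))) (mul ?k (f ?k x) (iv ?k (f ?k x)))"
    using nhtp_mul[OF nhtp_refl[OF fx] nhtp_iv[OF f_idem_nhtp[OF x]]] .
  thus ?thesis using fx nsph_closed by (simp add: g_def)
qed

text \<open>On \<open>\<pi>\<^sub>k\<close>, \<open>k \<ge> 1\<close>, the maps \<open>f\<^sub>*\<close> and \<open>g\<^sub>*\<close> are complementary idempotents: \<open>g \<beta> \<cdot> f \<alpha>\<close> has the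
  prescribed images, and a class is determined by its two images since \<open>x = g x \<cdot> f x\<close>.\<close>

lemma nhtp_f_g_mul:
  assumes \<alpha>: "nsph (Suc p) \<alpha>" and \<beta>: "nsph (Suc p) \<beta>"
  shows "nhtp (Suc p) (f (Suc p) (mul (Suc p) (g (Suc p) \<beta>) (f (Suc p) \<alpha>))) (f (Suc p) \<alpha>)"
    and "nhtp (Suc p) (g (Suc p) (mul (Suc p) (g (Suc p) \<beta>) (f (Suc p) \<alpha>))) (g (Suc p) \<beta>)"
proof -
  let ?k = "Suc p"
  have S1: "nsph ?k (g ?k \<beta>)" "nsph ?k (f ?k \<alpha>)" using \<alpha> \<beta> A.F_nsph B.F_nsph by auto
  have S2: "nsph ?k (f ?k (g ?k \<beta>))" "nsph ?k (f ?k (f ?k \<alpha>))" "nsph ?k (g ?k (g ?k \<beta>))" "nsph ?k (g ?k (f ?k \<alpha>))"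
    using S1 A.F_nsph B.F_nsph by auto
  have "nhtp ?k (mul ?k (f ?k (g ?k \<beta>)) (f ?k (f ?k \<alpha>))) (mul ?k (e ?k) (f ?k \<alpha>))"
    using nhtp_mul[OF f_g_nhtp_e[OF \<beta>] f_idem_nhtp[OF \<alpha>]] .
  with A.F_mul_nhtp[OF S1] show "nhtp ?k (f ?k (mul ?k (g ?k \<beta>) (f ?k \<alpha>))) (f ?k \<alpha>)"
    using nhtp_trans S2 nsph_mul S1 nsph_closed by (metis lunit)
  have "nhtp ?k (mul ?k (g ?k (g ?k \<beta>)) (g ?k (f ?k \<alpha>))) (mul ?k (g ?k \<beta>) (e ?k))"
    using nhtp_mul[OF g_idem_nhtp[OF \<beta>] g_f_nhtp_e[OF \<alpha>]] .
  with B.F_mul_nhtp[OF S1] show "nhtp ?k (g ?k (mul ?k (g ?k \<beta>) (f ?k \<alpha>))) (g ?k \<beta>)"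
    using nhtp_trans S2 nsph_mul S1 nsph_closed by (metis runit)
qed

lemma nhtp_if_f_g_nhtp:
  assumes "nsph k x" "nsph k x'" "nhtp k (f k x) (f k x')" "nhtp k (g k x) (g k x')"
  shows "nhtp k x x'"
  using nhtp_mul[OF assms(4,3)] assms(1,2) nsph_closed g_mul_f by metis

abbreviation AB where "AB \<equiv> sprod (colim G f) (colim G g)"
abbreviation diag where "diag \<equiv> \<lambda>n x. (colim_in G f n x, colim_in G g n x)"

lemma diag_cls: "diag n x = (A.cls n 0 x, B.cls n 0 x)"
  by (simp add: A.colim_in_cls B.colim_in_cls)

lemma diag_pi0_surj: "y \<in> cells AB 0 \<Longrightarrow> htp AB y 0 (diag 0 (e 0)) y"
  using A.colim_connected[OF connected] B.colim_connected[OF connected]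
  by (cases y) (simp add: diag_cls htp_sprod)

lemma diag_sph_surj:
  assumes v: "v \<in> C 0" and y: "sph AB (diag 0 v) (Suc p) y"
  shows "\<exists>x. sph G v (Suc p) x \<and> htp AB (diag 0 v) (Suc p) (diag (Suc p) x) y"
proof -
  let ?k = "Suc p"
  obtain c1 c2 where c: "y = (c1, c2)" by (cases y)
  have "sph A.X (A.cls 0 0 v) ?k c1" "sph B.X (B.cls 0 0 v) ?k c2"
    using y c by (simp_all add: diag_cls sph_sprod)
  then obtain M a N b where a: "c1 = A.cls ?k M a" "sph G ((f 0 ^^ M) v) ?k a"
    and b: "c2 = B.cls ?k N b" "sph G ((g 0 ^^ N) v) ?k b"
    using A.sph_colim_cls[OF v] B.sph_colim_cls[OF v] by meson
  define \<alpha> \<beta> where "\<alpha> = rebase ((f 0 ^^ M) v) ?k a" and "\<beta> = rebase ((g 0 ^^ N) v) ?k b"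
  have \<alpha>\<beta>: "nsph ?k \<alpha>" "nsph ?k \<beta>"
    using a b v sph_iff_nsph_rebase A.funpow_closed B.funpow_closed unfolding \<alpha>_def \<beta>_def by auto
  define x0 where "x0 = mul ?k (g ?k \<beta>) (f ?k \<alpha>)"
  have x0C: "x0 \<in> C ?k" unfolding x0_def using \<alpha>\<beta> nsph_closed by simp
  define x where "x = mul ?k x0 (pt G ?k v)"
  have rx: "rebase v ?k x = x0" unfolding x_def using v x0C by (rule rebase_mul_pt)
  have x: "sph G v ?k x" using sph_iff_nsph_rebase[OF v] rx x0C v \<alpha>\<beta>
    unfolding x_def x0_def by (simp add: A.F_nsph B.F_nsph nsph_mul)
  have "htp A.X (A.cls 0 0 v) ?k (A.cls ?k 0 x) c1"
    unfolding a(1) by (rule A.htp_colim_of_F_nhtp[OF connected f_idem_nhtp v x a(2)])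
      (use nhtp_f_g_mul(1)[OF \<alpha>\<beta>] in \<open>simp_all add: rx x0_def \<alpha>_def\<close>)
  moreover have "htp B.X (B.cls 0 0 v) ?k (B.cls ?k 0 x) c2"
    unfolding b(1) by (rule B.htp_colim_of_F_nhtp[OF connected g_idem_nhtp v x b(2)])
      (use nhtp_f_g_mul(2)[OF \<alpha>\<beta>] in \<open>simp_all add: rx x0_def \<beta>_def\<close>)
  ultimately show ?thesis using x c by (intro exI[of _ x]) (simp add: diag_cls htp_sprod)
qed

lemma diag_sph_inj:
  assumes v: "v \<in> C 0" and x: "sph G v (Suc p) x" and x': "sph G v (Suc p) x'"
    and h: "htp AB (diag 0 v) (Suc p) (diag (Suc p) x) (diag (Suc p) x')"
  shows "htp G v (Suc p) x x'"
proof -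
  let ?k = "Suc p"
  have hA: "htp A.X (A.cls 0 0 v) ?k (A.cls ?k 0 x) (A.cls ?k 0 x')"
    and hB: "htp B.X (B.cls 0 0 v) ?k (B.cls ?k 0 x) (B.cls ?k 0 x')"
    using h by (simp_all add: diag_cls htp_sprod)
  have "nhtp ?k (f ?k (rebase v ?k x)) (f ?k (rebase v ?k x'))"
    by (rule A.F_nhtp_of_htp_colim[OF connected f_idem_nhtp v x x' hA])
  moreover have "nhtp ?k (g ?k (rebase v ?k x)) (g ?k (rebase v ?k x'))"
    by (rule B.F_nhtp_of_htp_colim[OF connected g_idem_nhtp v x x' hB])
  ultimately have "nhtp ?k (rebase v ?k x) (rebase v ?k x')"
    using nhtp_if_f_g_nhtp sph_iff_nsph_rebase[OF v] x x' by blast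
  thus ?thesis using htp_iff_nhtp_rebase[OF v] x x' by (simp add: sph_def)
qed

lemma weq_diag: "weq G AB diag"
  unfolding weq_def
proof (intro conjI ballI allI impI)
  show "sset AB" using sset_sprod A.sset_colim B.sset_colim by blast
  show "kan AB" using kan_sprod A.kan_colim B.kan_colim by blast
  show "smap G AB diag" unfolding smap_def by (auto simp: diag_cls A.act_cls B.act_cls)
  show "\<exists>x\<in>C 0. htp AB y 0 (diag 0 x) y" if "y \<in> cells AB 0" for y
    using diag_pi0_surj[OF that] by (intro bexI[of _ "e 0"]) auto
  show "htp G x 0 x x'" if "x \<in> C 0" "x' \<in> C 0" for x x'
    using connected_htp_0[OF connected that] .
qed (use sset_G kan_G diag_sph_surj diag_sph_inj in \<open>auto simp: gr0_conv_Suc\<close>)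

end

theorem lemma4p4:
  fixes G :: "'a sset" and mul :: "nat \<Rightarrow> 'a \<Rightarrow> 'a \<Rightarrow> 'a" and e :: "nat \<Rightarrow> 'a"
    and f :: "nat \<Rightarrow> 'a \<Rightarrow> 'a"
  assumes grp: "sgroup G mul e"
    and connected: "\<forall>x\<in>cells G 0. htp G (e 0) 0 x (e 0)"
    and f_map: "smap G G f"
    and f_pointed: "f 0 (e 0) = e 0"
    and f_idem: "\<forall>k x. sph G (e 0) k x \<longrightarrow> htp G (e 0) k (f k (f k x)) (f k x)"
  defines "g \<equiv> (\<lambda>n x. mul n x (inv\<^bsub>grp G mul e n\<^esub> (f n x)))"
  shows "weq G (sprod (colim G f) (colim G g))
           (\<lambda>n x. (colim_in G f n x, colim_in G g n x))"
proof -
  interpret simplicial_group G mul e by (rule simplicial_group.intro[OF grp])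
  have "g = (\<lambda>n x. mul n x (iv n (f n x)))" unfolding g_def iv_def ..
  then interpret idempotent_endo G mul e f g
    by (intro idempotent_endo.intro simplicial_group_axioms
        idempotent_endo_axioms.intro f_map f_pointed connected f_idem)
  show ?thesis by (rule weq_diag)
qed

end
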